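(* Let $\tau$ and $\tau'$ be permutations of $F^r$ and $F^{r'}$ respectively, fixing the all-zero vectors, and let $\tau|\tau'$ be the permutation of $F^{r+r'}$ given by $(x|y)\mapsto\tau(x)|\tau'(y)$ for $x\in F^r$, $y\in F^{r'}$. Then: (1) if $SQS_\tau$ and $SQS_{\tau'}$ (of orders $2^{r+1}$ and $2^{r'+1}$) are point transitive, then $SQS_{\tau|\tau'}$ (of order $2^{r+r'+1}$) is point transitive; (2) if $S_\tau$ and $S_{\tau'}$ are coordinate transitive codes, then $S_{\tau|\tau'}$ is coordinate transitive; (3) if $\tau$ and $\tau'$ are induced by automorphisms of regular subgroups of $\mathrm{GA}(r,2)$ and $\mathrm{GA}(r',2)$ respectively, and $S_\tau$, $S_{\tau'}$ are coordinate transitive, then $S_{\tau|\tau'}$ is neighbor transitive.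
   Context: $F=\mathrm{GF}(2)$, $\mathbf 0$ the all-zero vector, $x|y$ concatenation. For $s\ge1$ and a permutation $\rho$ of $F^s$ fixing $\mathbf 0$: index coordinates of $F^{2^s}$ by $F^s$, let $e_a$ be the unit vector at $a$, $\mathcal H=\{x\in F^{2^s}:\sum_{a:x_a=1}a=\mathbf 0,\ \mathrm{wt}(x)\text{ even}\}$, $C\times D=\{x|y:x\in C,y\in D\}$, and $S_\rho=\bigcup_{a\in F^s}(\mathcal H+e_a+e_{\mathbf 0})\times(\mathcal H+e_{\rho(a)}+e_{\rho(\mathbf 0)})\subseteq F^{2^{s+1}}$. Its positions are denoted $(\{a\},\emptyset)$ (first half) and $(\emptyset,\{a\})$ (second half), $(X,Y)$ denotes $\{(\{x\},\emptyset):x\in X\}\cup\{(\emptyset,\{y\}):y\in Y\}$, and $SQS_\rho$ is the Steiner quadruple system of quadruples $\{(\{a,b,c,d\},\emptyset)\}$ and $\{(\emptyset,\{a,b,c,d\})\}$ with $a,b,c,d$ pairwise distinct and $a+b+c+d=\mathbf 0$, together with $\{(\{a,c\},\{b,d\}):\rho(a+c)=b+d\ne\mathbf 0\}$. An SQS is point transitive if its automorphism group is transitive on points. $\mathrm{PAut}(C)=\{\pi:\pi(C)=C\}$ (coordinate permutations, $\pi(y)_i=y_{\pi^{-1}(i)}$); $C$ is coordinate transitive if $\mathrm{PAut}(C)$ is transitive on coordinates. $\mathrm{Aut}(C)$ is the stabilizer of $C$ in the group of maps $y\mapsto x+\pi(y)$; $C$ is neighbor transitive if $\mathrm{Aut}(C)$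 is transitive on $C$ and on the words at distance exactly $1$ from $C$. $\mathrm{GA}(s,2)$ is the group of affine maps $b\mapsto a+Mb$ of $F^s$; a subgroup $G$ is regular if it acts regularly on $F^s$; with $g_a\in G$ the unique element mapping $\mathbf 0$ to $a$, an automorphism $T$ of $G$ induces the permutation $\rho$ of $F^s$ with $T(g_a)=g_{\rho(a)}$. *)

theory Defs
  imports "HOL-Algebra.Group" "HOL-Library.FuncSet"
begin

section \<open>Vectors of F^s, F = GF(2), as boolean lists of length s\<close>

definition vecs :: "nat \<Rightarrow> bool list set" where
  "vecs s = {x. length x = s}"

definition zero :: "nat \<Rightarrow> bool list" where
  "zero s = replicate s False"

definition vadd :: "bool list \<Rightarrow> bool list \<Rightarrow> bool list" where
  "vadd x y = map2 (\<noteq>) x y"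

definition vsum :: "nat \<Rightarrow> bool list set \<Rightarrow> bool list" where
  "vsum s X = map (\<lambda>i. odd (card {x\<in>X. x ! i})) [0..<s]"

text \<open>Binary words of length 2^s, coordinates indexed by F^s, are identified with their supports.\<close>
definition symd :: "'a set \<Rightarrow> 'a set \<Rightarrow> 'a set" where
  "symd A B = (A - B) \<union> (B - A)"

definition Hcode :: "nat \<Rightarrow> bool list set set" where
  "Hcode s = {X. X \<subseteq> vecs s \<and> vsum s X = zero s \<and> even (card X)}"

text \<open>Positions of F^{2^{s+1}}: Inl a = ({a},\<emptyset>) (first half), Inr a = (\<emptyset>,{a}) (second half).\<close>
definition positions :: "nat \<Rightarrow> (bool list + bool list) set" where
  "positions s = Inl ` vecs s \<union> Inr ` vecs s"

definition Scode :: "nat \<Rightarrow> (bool list \<Rightarrow> bool list) \<Rightarrow> (bool list + bool list) set set" where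
  "Scode s \<rho> = {Inl ` X \<union> Inr ` Y | X Y a. a \<in> vecs s \<and>
       symd (symd X {a}) {zero s} \<in> Hcode s \<and>
       symd (symd Y {\<rho> a}) {\<rho> (zero s)} \<in> Hcode s}"

definition SQS_blocks :: "nat \<Rightarrow> (bool list \<Rightarrow> bool list) \<Rightarrow> (bool list + bool list) set set" where
  "SQS_blocks s \<rho> =
     {Inl ` {a,b,c,d} | a b c d. a \<in> vecs s \<and> b \<in> vecs s \<and> c \<in> vecs s \<and> d \<in> vecs s \<and>
        distinct [a,b,c,d] \<and> vadd (vadd a b) (vadd c d) = zero s}
   \<union> {Inr ` {a,b,c,d} | a b c d. a \<in> vecs s \<and> b \<in> vecs s \<and> c \<in> vecs s \<and> d \<in> vecs s \<and>
        distinct [a,b,c,d] \<and> vadd (vadd a b) (vadd c d) = zero s}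
   \<union> {{Inl a, Inl c, Inr b, Inr d} | a b c d. a \<in> vecs s \<and> b \<in> vecs s \<and> c \<in> vecs s \<and> d \<in> vecs s \<and>
        \<rho> (vadd a c) = vadd b d \<and> vadd b d \<noteq> zero s}"

definition point_transitive :: "'p set \<Rightarrow> 'p set set \<Rightarrow> bool" where
  "point_transitive P B \<longleftrightarrow> (\<forall>p\<in>P. \<forall>q\<in>P. \<exists>\<sigma>. bij_betw \<sigma> P P \<and> (\<lambda>b. \<sigma> ` b) ` B = B \<and> \<sigma> p = q)"

text \<open>Codes C with coordinate set N; words are subsets of N (supports).
  A coordinate permutation acts on a word y by y \<mapsto> \<pi> ` y.\<close>
definition coord_transitive :: "'p set \<Rightarrow> 'p set set \<Rightarrow> bool" where
  "coord_transitive N C \<longleftrightarrow> (\<forall>i\<in>N. \<forall>j\<in>N. \<exists>\<pi>. bij_betw \<pi> N N \<and> (\<lambda>y. \<pi> ` y) ` C = C \<and> \<pi> i = j)"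

definition is_aut :: "'p set \<Rightarrow> 'p set set \<Rightarrow> 'p set \<Rightarrow> ('p \<Rightarrow> 'p) \<Rightarrow> bool" where
  "is_aut N C x \<pi> \<longleftrightarrow> x \<subseteq> N \<and> bij_betw \<pi> N N \<and> (\<lambda>y. symd x (\<pi> ` y)) ` C = C"

definition neighbors :: "'p set \<Rightarrow> 'p set set \<Rightarrow> 'p set set" where
  "neighbors N C = {y. y \<subseteq> N \<and> y \<notin> C \<and> (\<exists>c\<in>C. card (symd y c) = 1)}"

definition neighbor_transitive :: "'p set \<Rightarrow> 'p set set \<Rightarrow> bool" where
  "neighbor_transitive N C \<longleftrightarrow>
     (\<forall>c\<in>C. \<forall>c'\<in>C. \<exists>x \<pi>. is_aut N C x \<pi> \<and> symd x (\<pi> ` c) = c') \<and>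
     (\<forall>y\<in>neighbors N C. \<forall>y'\<in>neighbors N C. \<exists>x \<pi>. is_aut N C x \<pi> \<and> symd x (\<pi> ` y) = y')"

definition matvec :: "nat \<Rightarrow> (nat \<Rightarrow> nat \<Rightarrow> bool) \<Rightarrow> bool list \<Rightarrow> bool list" where
  "matvec s M b = map (\<lambda>i. odd (card {j. j < s \<and> M i j \<and> b ! j})) [0..<s]"

definition GA :: "nat \<Rightarrow> (bool list \<Rightarrow> bool list) set" where
  "GA s = {restrict (\<lambda>b. vadd a (matvec s M b)) (vecs s) | a M.
             a \<in> vecs s \<and> bij_betw (matvec s M) (vecs s) (vecs s)}"

definition GAgrp :: "nat \<Rightarrow> (bool list \<Rightarrow> bool list) monoid" where
  "GAgrp s = \<lparr>carrier = GA s, monoid.mult = compose (vecs s), one = restrict id (vecs s)\<rparr>"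

definition regular_subgroup :: "nat \<Rightarrow> (bool list \<Rightarrow> bool list) set \<Rightarrow> bool" where
  "regular_subgroup s G \<longleftrightarrow> subgroup G (GAgrp s) \<and>
     (\<forall>a\<in>vecs s. \<forall>b\<in>vecs s. \<exists>!g. g \<in> G \<and> g a = b)"

definition g_elt :: "nat \<Rightarrow> (bool list \<Rightarrow> bool list) set \<Rightarrow> bool list \<Rightarrow> (bool list \<Rightarrow> bool list)" where
  "g_elt s G a = (THE g. g \<in> G \<and> g (zero s) = a)"

definition induced_by_reg_aut :: "nat \<Rightarrow> (bool list \<Rightarrow> bool list) \<Rightarrow> bool" where
  "induced_by_reg_aut s \<rho> \<longleftrightarrow> (\<exists>G T. regular_subgroup s G \<and>
      T \<in> iso (GAgrp s\<lparr>carrier := G\<rparr>) (GAgrp s\<lparr>carrier := G\<rparr>) \<and>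
      (\<forall>a\<in>vecs s. T (g_elt s G a) = g_elt s G (\<rho> a)))"

definition perm_fix0 :: "nat \<Rightarrow> (bool list \<Rightarrow> bool list) \<Rightarrow> bool" where
  "perm_fix0 s \<rho> \<longleftrightarrow> bij_betw \<rho> (vecs s) (vecs s) \<and> \<rho> (zero s) = zero s"

definition cat_perm :: "nat \<Rightarrow> (bool list \<Rightarrow> bool list) \<Rightarrow> (bool list \<Rightarrow> bool list) \<Rightarrow> bool list \<Rightarrow> bool list" where
  "cat_perm r \<tau> \<tau>' z = \<tau> (take r z) @ \<tau>' (drop r z)"

end

theory Submission
  imports Defs
begin

text \<open>
  Write the words of \<open>S\<^sub>\<rho>\<close> as pairs \<open>(X, Y)\<close> of even-size sets of vectors with
  \<open>\<Sigma>Y = \<rho>(\<Sigma>X)\<close>. A pair of affine permutations \<open>(g, h)\<close> acting on the two halves is an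
  automorphism when \<open>\<rho>\<close> intertwines their linear parts, and a pair exchanging the halves is one
  when \<open>\<rho> M \<rho> = N\<close> for linear \<open>M, N\<close> (\<open>\<rho>\<close> is then called swappable). Translations and
  one exchanging map make \<open>S\<^sub>\<rho>\<close> coordinate transitive. Conversely, if \<open>SQS\<^sub>\<rho>\<close> (the
  weight-4 words) is point transitive, either \<open>\<rho>\<close> is additive, or an automorphism moving a left
  point to a right point must exchange the two halves; the blocks then force both of its halves to
  be affine, and their linear parts show that \<open>\<rho>\<close> is swappable. So point transitivity of
  \<open>SQS\<^sub>\<rho>\<close>, coordinate transitivity of \<open>S\<^sub>\<rho>\<close> and swappability of \<open>\<rho>\<close> are equivalent,
  and swappability passes to \<open>\<tau>|\<tau>'\<close> componentwise.

  For neighbor transitivity, an automorphism \<open>T\<close> of a regular subgroup \<open>G\<close> inducing \<open>\<rho>\<close> gives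
  \<open>\<rho> \<circ> g = T(g) \<circ> \<rho>\<close> for \<open>g \<in> G\<close>; such affine pairs, combined with translations by codewords,
  make the automorphism group transitive on \<open>S\<^sub>\<rho>\<close>, again componentwise for \<open>\<tau>|\<tau>'\<close>.
  Together with coordinate transitivity this moves any neighbor to any other.
\<close>

lemma symd_commute: "symd A B = symd B A"
  unfolding symd_def by blast

lemma symd_assoc: "symd (symd A B) C = symd A (symd B C)"
  unfolding symd_def by blast

lemma symd_empty_left [simp]: "symd {} A = A"
  unfolding symd_def by blast

lemma symd_empty_right [simp]: "symd A {} = A"
  unfolding symd_def by blast

lemma symd_cancel_left [simp]: "symd A (symd A B) = B"
  unfolding symd_def by blast

lemma symd_cancel_right [simp]: "symd (symd A B) B = A"
  unfolding symd_def by blast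

lemma finite_symd [simp]: "finite A \<Longrightarrow> finite B \<Longrightarrow> finite (symd A B)"
  by (simp add: symd_def)

lemma symd_subset: "A \<subseteq> C \<Longrightarrow> B \<subseteq> C \<Longrightarrow> symd A B \<subseteq> C"
  unfolding symd_def by blast

lemma Collect_symd: "{x \<in> symd A B. P x} = symd {x \<in> A. P x} {x \<in> B. P x}"
  unfolding symd_def by blast

lemma image_symd:
  assumes "inj_on f C" "A \<subseteq> C" "B \<subseteq> C"
  shows "f ` symd A B = symd (f ` A) (f ` B)"
  using assms unfolding symd_def inj_on_def by blast

lemma card_symd:
  assumes "finite A" "finite B"
  shows "card (symd A B) + 2 * card (A \<inter> B) = card A + card B"
proof -
  have "card (symd A B) = card (A - B) + card (B - A)"
    unfolding symd_def using assms by (intro card_Un_disjoint) auto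
  moreover have "card (A - B) = card A - card (A \<inter> B)" "card (B - A) = card B - card (A \<inter> B)"
    using assms by (simp_all add: card_Diff_subset_Int Int_commute)
  moreover have "card (A \<inter> B) \<le> card A" "card (A \<inter> B) \<le> card B"
    using assms by (simp_all add: card_mono)
  ultimately show ?thesis by simp
qed

lemma even_card_symd_iff:
  "finite A \<Longrightarrow> finite B \<Longrightarrow> even (card (symd A B)) \<longleftrightarrow> (even (card A) \<longleftrightarrow> even (card B))"
  using card_symd[of A B] by (metis dvd_triv_left even_add)

lemma Plus_eq_Plus_iff [simp]: "A <+> B = C <+> D \<longleftrightarrow> A = C \<and> B = D"
  by (auto simp: Plus_def)

lemma Plus_subset_Plus_iff [simp]: "A <+> B \<subseteq> C <+> D \<longleftrightarrow> A \<subseteq> C \<and> B \<subseteq> D"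
  by (auto simp: Plus_def)

lemma Plus_empty_empty [simp]: "{} <+> {} = {}"
  by simp

lemma Inl_in_Plus_iff [simp]: "Inl a \<in> A <+> B \<longleftrightarrow> a \<in> A"
  by (auto simp: Plus_def)

lemma Inr_in_Plus_iff [simp]: "Inr b \<in> A <+> B \<longleftrightarrow> b \<in> B"
  by (auto simp: Plus_def)

lemma symd_Plus: "symd (A <+> B) (C <+> D) = symd A C <+> symd B D"
  by (auto simp: Plus_def symd_def)

lemma image_map_sum_Plus [simp]: "map_sum g h ` (A <+> B) = g ` A <+> h ` B"
  by (simp add: Plus_def image_Un image_image)

lemma bij_betw_map_sum:
  assumes "bij_betw g A A'" "bij_betw h B B'"
  shows "bij_betw (map_sum g h) (A <+> B) (A' <+> B')"
proof (rule bij_betw_imageI)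
  have "inj_on g A" "inj_on h B"
    using assms by (simp_all add: bij_betw_def)
  then show "inj_on (map_sum g h) (A <+> B)"
    by (intro inj_onI) (auto elim!: PlusE dest: inj_onD)
  show "map_sum g h ` (A <+> B) = A' <+> B'"
    using assms unfolding bij_betw_def by simp
qed

lemma in_vecs_iff [simp]: "x \<in> vecs s \<longleftrightarrow> length x = s"
  by (simp add: vecs_def)

lemma finite_vecs [simp]: "finite (vecs s)"
  unfolding vecs_def using finite_lists_length_eq[of "UNIV :: bool set" s] by simp

lemma finite_subset_vecs: "X \<subseteq> vecs s \<Longrightarrow> finite X"
  using finite_subset finite_vecs by blast

lemma length_zero [simp]: "length (zero s) = s"
  by (simp add: zero_def)

lemma nth_zero [simp]: "i < s \<Longrightarrow> zero s ! i = False"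
  by (simp add: zero_def)

lemma length_vadd [simp]: "length (vadd x y) = min (length x) (length y)"
  by (simp add: vadd_def)

lemma nth_vadd [simp]: "i < length x \<Longrightarrow> i < length y \<Longrightarrow> vadd x y ! i = (x ! i \<noteq> y ! i)"
  by (simp add: vadd_def)

lemma length_vsum [simp]: "length (vsum s X) = s"
  by (simp add: vsum_def)

lemma nth_vsum [simp]: "i < s \<Longrightarrow> vsum s X ! i = odd (card {x \<in> X. x ! i})"
  by (simp add: vsum_def)

lemma vadd_commute: "vadd x y = vadd y x"
  by (rule nth_equalityI) auto

lemma vadd_assoc: "vadd (vadd x y) z = vadd x (vadd y z)"
  by (rule nth_equalityI) auto

lemma vadd_left_commute: "vadd x (vadd y z) = vadd y (vadd x z)"
  by (rule nth_equalityI) auto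

lemmas vadd_ac = vadd_assoc vadd_commute vadd_left_commute

lemma vadd_zero_right [simp]: "length x = s \<Longrightarrow> vadd x (zero s) = x"
  by (rule nth_equalityI) auto

lemma vadd_zero_left [simp]: "length x = s \<Longrightarrow> vadd (zero s) x = x"
  by (rule nth_equalityI) auto

lemma vadd_self [simp]: "length x = s \<Longrightarrow> vadd x x = zero s"
  by (rule nth_equalityI) auto

lemma vadd_cancel_left [simp]: "length x = length y \<Longrightarrow> vadd x (vadd x y) = y"
  by (rule nth_equalityI) auto

lemma vadd_left_cancel_iff:
  "length w = length x \<Longrightarrow> length w = length y \<Longrightarrow> vadd w x = vadd w y \<longleftrightarrow> x = y"
  by (auto simp: list_eq_iff_nth_eq)

lemma vadd_eq_zero_iff: "length x = s \<Longrightarrow> length y = s \<Longrightarrow> vadd x y = zero s \<longleftrightarrow> x = y"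
  by (auto simp: list_eq_iff_nth_eq)

lemma vadd_eq_left_iff: "length x = s \<Longrightarrow> length y = s \<Longrightarrow> vadd x y = x \<longleftrightarrow> y = zero s"
  by (auto simp: list_eq_iff_nth_eq)

lemma vadd_vadd_eq_left_iff:
  "length a = s \<Longrightarrow> length b = s \<Longrightarrow> length c = s \<Longrightarrow> vadd (vadd a b) c = a \<longleftrightarrow> b = c"
  by (simp add: vadd_assoc vadd_eq_left_iff vadd_eq_zero_iff)

lemma vadd4_eq_zero_iff:
  "length a = s \<Longrightarrow> length b = s \<Longrightarrow> length c = s \<Longrightarrow> length d = s \<Longrightarrow>
    vadd (vadd a b) (vadd c d) = zero s \<longleftrightarrow> d = vadd (vadd a b) c"
  by (auto simp: list_eq_iff_nth_eq)

lemma bij_betw_vecs_length: "bij_betw g (vecs s) (vecs s) \<Longrightarrow> length x = s \<Longrightarrow> length (g x) = s"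
  using bij_betwE by fastforce

lemma vsum_empty [simp]: "vsum s {} = zero s"
  by (rule nth_equalityI) auto

lemma vsum_singleton [simp]: "length a = s \<Longrightarrow> vsum s {a} = a"
proof (rule nth_equalityI)
  fix i
  have "{x \<in> {a}. x ! i} = (if a ! i then {a} else {})"
    by auto
  then show "i < length (vsum s {a}) \<Longrightarrow> vsum s {a} ! i = a ! i"
    by simp
qed simp

lemma vsum_symd: "finite A \<Longrightarrow> finite B \<Longrightarrow> vsum s (symd A B) = vadd (vsum s A) (vsum s B)"
  by (rule nth_equalityI) (simp_all add: Collect_symd even_card_symd_iff)

lemma vsum_insert:
  assumes "finite X" "x \<notin> X" "length x = s"
  shows "vsum s (insert x X) = vadd x (vsum s X)"
proof -
  have "insert x X = symd {x} X"
    using assms(2) by (auto simp: symd_def)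
  then show ?thesis
    using assms by (simp add: vsum_symd)
qed

lemma vsum_doubleton: "length a = s \<Longrightarrow> length b = s \<Longrightarrow> a \<noteq> b \<Longrightarrow> vsum s {a, b} = vadd a b"
  by (simp add: vsum_insert)

lemma vsum_four:
  assumes "distinct [a, b, c, d]" "length a = s" "length b = s" "length c = s" "length d = s"
  shows "vsum s {a, b, c, d} = vadd (vadd a b) (vadd c d)"
  using assms by (simp add: vsum_insert vsum_doubleton vadd_assoc)

section \<open>The code \<open>S\<^sub>\<rho>\<close> and its quadruple system\<close>

lemma perm_fix0_length: "perm_fix0 s \<rho> \<Longrightarrow> length x = s \<Longrightarrow> length (\<rho> x) = s"
  unfolding perm_fix0_def using bij_betw_vecs_length by blast

lemma perm_fix0_zero: "perm_fix0 s \<rho> \<Longrightarrow> \<rho> (zero s) = zero s"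
  by (simp add: perm_fix0_def)

lemma perm_fix0_eq_iff:
  "perm_fix0 s \<rho> \<Longrightarrow> length x = s \<Longrightarrow> length y = s \<Longrightarrow> \<rho> x = \<rho> y \<longleftrightarrow> x = y"
  unfolding perm_fix0_def bij_betw_def inj_on_def by auto

lemma perm_fix0_eq_zero_iff: "perm_fix0 s \<rho> \<Longrightarrow> length x = s \<Longrightarrow> \<rho> x = zero s \<longleftrightarrow> x = zero s"
  using perm_fix0_eq_iff[of s \<rho> x "zero s"] by (simp add: perm_fix0_zero)

definition sum_code :: "nat \<Rightarrow> (bool list \<Rightarrow> bool list) \<Rightarrow> (bool list + bool list) set set" where
  "sum_code s \<rho> = {X <+> Y | X Y. X \<subseteq> vecs s \<and> Y \<subseteq> vecs s \<and> even (card X) \<and> even (card Y) \<and>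
                      vsum s Y = \<rho> (vsum s X)}"

lemma Plus_in_sum_code_iff [simp]:
  "X <+> Y \<in> sum_code s \<rho> \<longleftrightarrow>
     X \<subseteq> vecs s \<and> Y \<subseteq> vecs s \<and> even (card X) \<and> even (card Y) \<and> vsum s Y = \<rho> (vsum s X)"
  unfolding sum_code_def by auto

lemma sum_codeE:
  assumes "W \<in> sum_code s \<rho>"
  obtains X Y where "W = X <+> Y" "X \<subseteq> vecs s" "Y \<subseteq> vecs s" "even (card X)" "even (card Y)"
    "vsum s Y = \<rho> (vsum s X)"
  using assms unfolding sum_code_def by blast

lemma positions_eq_Plus: "positions s = vecs s <+> vecs s"
  by (simp add: positions_def Plus_def)

lemma sum_code_subset_positions: "W \<in> sum_code s \<rho> \<Longrightarrow> W \<subseteq> positions s"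
  by (auto simp: positions_eq_Plus elim: sum_codeE)

lemma finite_sum_code: "finite (sum_code s \<rho>)"
proof (rule finite_subset)
  show "sum_code s \<rho> \<subseteq> Pow (positions s)"
    using sum_code_subset_positions by blast
qed (simp add: positions_eq_Plus)

lemma empty_in_sum_code: "perm_fix0 s \<rho> \<Longrightarrow> {} \<in> sum_code s \<rho>"
  using Plus_in_sum_code_iff[of "{}" "{}" s \<rho>] by (simp add: perm_fix0_zero)

lemma symd_symd_in_Hcode_iff:
  assumes "length a = s" "length b = s"
  shows "symd (symd X {a}) {b} \<in> Hcode s \<longleftrightarrow> X \<subseteq> vecs s \<and> even (card X) \<and> vsum s X = vadd a b"
proof (cases "X \<subseteq> vecs s")
  case True
  then have "finite X"
    by (rule finite_subset_vecs)
  then have "even (card (symd (symd X {a}) {b})) \<longleftrightarrow> even (card X)"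
    by (simp add: even_card_symd_iff)
  moreover have "vsum s (symd (symd X {a}) {b}) = zero s \<longleftrightarrow> vsum s X = vadd a b"
    using \<open>finite X\<close> assms vadd_eq_zero_iff[of "vsum s X" s "vadd a b"] by (simp add: vsum_symd vadd_assoc)
  moreover have "symd (symd X {a}) {b} \<subseteq> vecs s"
    using True assms by (auto simp: symd_def)
  ultimately show ?thesis
    using True by (auto simp: Hcode_def)
next
  case False
  then have "\<not> symd (symd X {a}) {b} \<subseteq> vecs s"
    using assms by (auto simp: symd_def)
  then show ?thesis
    using False by (simp add: Hcode_def)
qed

lemma Scode_eq_sum_code:
  assumes "perm_fix0 s \<rho>"
  shows "Scode s \<rho> = sum_code s \<rho>"
proof -
  have "Scode s \<rho> = {X <+> Y | X Y a. a \<in> vecs s \<and>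
      symd (symd X {a}) {zero s} \<in> Hcode s \<and> symd (symd Y {\<rho> a}) {\<rho> (zero s)} \<in> Hcode s}"
    by (simp add: Scode_def Plus_def)
  also have "\<dots> = {X <+> Y | X Y a. a \<in> vecs s \<and> X \<subseteq> vecs s \<and> even (card X) \<and> vsum s X = a \<and>
      Y \<subseteq> vecs s \<and> even (card Y) \<and> vsum s Y = \<rho> a}"
    using assms by (simp add: symd_symd_in_Hcode_iff perm_fix0_zero perm_fix0_length cong: conj_cong)
  also have "\<dots> = sum_code s \<rho>"
    unfolding sum_code_def by auto
  finally show ?thesis .
qed

lemma card_eq_4E:
  assumes "card A = 4"
  obtains a b c d where "A = {a, b, c, d}" "distinct [a, b, c, d]"
  using assms by (auto simp: card_Suc_eq numeral_eq_Suc)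

lemma image_Inl_eq_Plus: "Inl ` X = X <+> {}"
  by (simp add: Plus_def)

lemma image_Inr_eq_Plus: "Inr ` Y = {} <+> Y"
  by (simp add: Plus_def)

lemma mixed_quad_eq_Plus: "{Inl a, Inl c, Inr b, Inr d} = {a, c} <+> {b, d}"
  by (simp add: Plus_def insert_commute)

lemma SQS_blocksE:
  assumes "W \<in> SQS_blocks s \<rho>"
  obtains (left) a b c d where "W = Inl ` {a, b, c, d}" "distinct [a, b, c, d]"
      "a \<in> vecs s" "b \<in> vecs s" "c \<in> vecs s" "d \<in> vecs s" "vadd (vadd a b) (vadd c d) = zero s"
  | (right) a b c d where "W = Inr ` {a, b, c, d}" "distinct [a, b, c, d]"
      "a \<in> vecs s" "b \<in> vecs s" "c \<in> vecs s" "d \<in> vecs s" "vadd (vadd a b) (vadd c d) = zero s"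
  | (mixed) a b c d where "W = {Inl a, Inl c, Inr b, Inr d}"
      "a \<in> vecs s" "b \<in> vecs s" "c \<in> vecs s" "d \<in> vecs s" "\<rho> (vadd a c) = vadd b d" "vadd b d \<noteq> zero s"
  using assms unfolding SQS_blocks_def
  apply (elim UnE)
  subgoal by (elim CollectE exE conjE) (rule left; assumption)
  subgoal by (elim CollectE exE conjE) (rule right; assumption)
  subgoal by (elim CollectE exE conjE) (rule mixed; assumption)
  done

lemma SQS_blocks_leftI:
  "a \<in> vecs s \<Longrightarrow> b \<in> vecs s \<Longrightarrow> c \<in> vecs s \<Longrightarrow> d \<in> vecs s \<Longrightarrow> distinct [a, b, c, d] \<Longrightarrow>
    vadd (vadd a b) (vadd c d) = zero s \<Longrightarrow> Inl ` {a, b, c, d} \<in> SQS_blocks s \<rho>"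
  unfolding SQS_blocks_def by (rule UnI1, rule UnI1, blast)

lemma SQS_blocks_rightI:
  "a \<in> vecs s \<Longrightarrow> b \<in> vecs s \<Longrightarrow> c \<in> vecs s \<Longrightarrow> d \<in> vecs s \<Longrightarrow> distinct [a, b, c, d] \<Longrightarrow>
    vadd (vadd a b) (vadd c d) = zero s \<Longrightarrow> Inr ` {a, b, c, d} \<in> SQS_blocks s \<rho>"
  unfolding SQS_blocks_def by (rule UnI1, rule UnI2, blast)

lemma SQS_blocks_mixedI:
  "a \<in> vecs s \<Longrightarrow> b \<in> vecs s \<Longrightarrow> c \<in> vecs s \<Longrightarrow> d \<in> vecs s \<Longrightarrow>
    \<rho> (vadd a c) = vadd b d \<Longrightarrow> vadd b d \<noteq> zero s \<Longrightarrow> {Inl a, Inl c, Inr b, Inr d} \<in> SQS_blocks s \<rho>"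
  unfolding SQS_blocks_def by (rule UnI2, blast)

lemma SQS_block_in_sum_code:
  assumes \<rho>: "perm_fix0 s \<rho>" and W: "W \<in> SQS_blocks s \<rho>"
  shows "W \<in> sum_code s \<rho> \<and> card W = 4"
  using W
proof (cases rule: SQS_blocksE)
  case (left a b c d)
  then have "W = {a, b, c, d} <+> {}"
    by (simp only: image_Inl_eq_Plus)
  with left(2-) \<rho> show ?thesis
    by (simp add: card_Plus vsum_four perm_fix0_zero)
next
  case (right a b c d)
  then have "W = {} <+> {a, b, c, d}"
    by (simp only: image_Inr_eq_Plus)
  with right(2-) \<rho> show ?thesis
    by (simp add: card_Plus vsum_four perm_fix0_zero)
next
  case (mixed a b c d)
  then have "W = {a, c} <+> {b, d}"
    by (simp only: mixed_quad_eq_Plus)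
  moreover have "a \<noteq> c" "b \<noteq> d"
    using mixed \<rho> by (auto simp: perm_fix0_zero)
  ultimately show ?thesis
    using mixed(2-) by (simp add: card_Plus vsum_doubleton)
qed

lemma weight4_in_SQS_blocks:
  assumes \<rho>: "perm_fix0 s \<rho>" and W: "W \<in> sum_code s \<rho>" "card W = 4"
  shows "W \<in> SQS_blocks s \<rho>"
proof -
  obtain X Y where W_eq: "W = X <+> Y" "card (X <+> Y) = 4" and XY: "X \<subseteq> vecs s" "Y \<subseteq> vecs s"
    and even: "even (card X)" "even (card Y)" and sum: "vsum s Y = \<rho> (vsum s X)"
    using W by (auto elim: sum_codeE)
  have fin: "finite X" "finite Y"
    using XY finite_subset_vecs by blast+
  then have card: "card X + card Y = 4"
    using W_eq(2) by (simp add: card_Plus)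
  have "card X = 0 \<or> card X = 2 \<or> card X = 4"
    using even card by presburger
  then consider (right) "card X = 0" | (mixed) "card X = 2" | (left) "card X = 4"
    by auto
  then show ?thesis
  proof cases
    case right
    obtain a b c d where Y: "Y = {a, b, c, d}" "distinct [a, b, c, d]"
      using right card by (auto elim: card_eq_4E)
    have "vadd (vadd a b) (vadd c d) = zero s"
      using Y XY sum right fin \<rho> by (simp add: vsum_four perm_fix0_zero)
    then have "Inr ` {a, b, c, d} \<in> SQS_blocks s \<rho>"
      using Y XY by (intro SQS_blocks_rightI) auto
    moreover have "W = Inr ` {a, b, c, d}"
      unfolding image_Inr_eq_Plus using right fin W_eq Y by simp
    ultimately show ?thesis
      by simp
  next
    case mixed
    obtain a c where X: "X = {a, c}" "a \<noteq> c"
      using mixed by (auto simp: card_2_iff)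
    obtain b d where Y: "Y = {b, d}" "b \<noteq> d"
      using mixed card by (auto simp: card_2_iff)
    have "\<rho> (vadd a c) = vadd b d" "vadd b d \<noteq> zero s"
      using X Y XY sum vadd_eq_zero_iff[of b s d] by (simp_all add: vsum_doubleton)
    then have "{Inl a, Inl c, Inr b, Inr d} \<in> SQS_blocks s \<rho>"
      using X Y XY by (intro SQS_blocks_mixedI) auto
    moreover have "W = {Inl a, Inl c, Inr b, Inr d}"
      unfolding mixed_quad_eq_Plus using W_eq X Y by simp
    ultimately show ?thesis
      by simp
  next
    case left
    obtain a b c d where X: "X = {a, b, c, d}" "distinct [a, b, c, d]"
      using left by (auto elim: card_eq_4E)
    have "\<rho> (vsum s X) = zero s"
      using sum left card fin by simp
    then have "vadd (vadd a b) (vadd c d) = zero s"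
      using X XY \<rho> by (simp add: vsum_four perm_fix0_eq_zero_iff)
    then have "Inl ` {a, b, c, d} \<in> SQS_blocks s \<rho>"
      using X XY by (intro SQS_blocks_leftI) auto
    moreover have "W = Inl ` {a, b, c, d}"
      unfolding image_Inl_eq_Plus using left card fin W_eq X by simp
    ultimately show ?thesis
      by simp
  qed
qed

lemma SQS_blocks_eq_weight4:
  assumes "perm_fix0 s \<rho>"
  shows "SQS_blocks s \<rho> = {W \<in> sum_code s \<rho>. card W = 4}"
  using SQS_block_in_sum_code[OF assms] weight4_in_SQS_blocks[OF assms] by blast

section \<open>Affine permutations of \<open>F\<^sup>s\<close>\<close>

text \<open>Over GF(2) a bijection is affine exactly when it preserves sums of three vectors.\<close>

definition affine_perm :: "nat \<Rightarrow> (bool list \<Rightarrow> bool list) \<Rightarrow> bool" where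
  "affine_perm s g \<longleftrightarrow> bij_betw g (vecs s) (vecs s) \<and>
     (\<forall>x\<in>vecs s. \<forall>y\<in>vecs s. \<forall>z\<in>vecs s. g (vadd (vadd x y) z) = vadd (vadd (g x) (g y)) (g z))"

definition linear_perm :: "nat \<Rightarrow> (bool list \<Rightarrow> bool list) \<Rightarrow> bool" where
  "linear_perm s M \<longleftrightarrow> bij_betw M (vecs s) (vecs s) \<and>
     (\<forall>x\<in>vecs s. \<forall>y\<in>vecs s. M (vadd x y) = vadd (M x) (M y))"

definition linear_part :: "nat \<Rightarrow> (bool list \<Rightarrow> bool list) \<Rightarrow> bool list \<Rightarrow> bool list" where
  "linear_part s g z = vadd (g z) (g (zero s))"

lemma affine_perm_length: "affine_perm s g \<Longrightarrow> length x = s \<Longrightarrow> length (g x) = s"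
  unfolding affine_perm_def using bij_betw_vecs_length by blast

lemma affine_perm_inj_on: "affine_perm s g \<Longrightarrow> inj_on g (vecs s)"
  unfolding affine_perm_def bij_betw_def by blast

lemma affine_perm_add3:
  "affine_perm s g \<Longrightarrow> length x = s \<Longrightarrow> length y = s \<Longrightarrow> length z = s \<Longrightarrow>
    g (vadd (vadd x y) z) = vadd (vadd (g x) (g y)) (g z)"
  unfolding affine_perm_def by simp

lemma linear_perm_length: "linear_perm s M \<Longrightarrow> length x = s \<Longrightarrow> length (M x) = s"
  unfolding linear_perm_def using bij_betw_vecs_length by blast

lemma linear_perm_add: "linear_perm s M \<Longrightarrow> length x = s \<Longrightarrow> length y = s \<Longrightarrow> M (vadd x y) = vadd (M x) (M y)"
  unfolding linear_perm_def by simp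

lemma linear_perm_zero:
  assumes "linear_perm s M"
  shows "M (zero s) = zero s"
proof -
  have "M (zero s) = vadd (M (zero s)) (M (zero s))"
    using linear_perm_add[OF assms, of "zero s" "zero s"] by simp
  then show ?thesis
    using linear_perm_length[OF assms, of "zero s"] by simp
qed

lemma linear_perm_id: "linear_perm s (\<lambda>z. z)"
  unfolding linear_perm_def by (simp add: bij_betw_def)

lemma bij_betw_vadd_right: "length c = s \<Longrightarrow> bij_betw (\<lambda>z. vadd z c) (vecs s) (vecs s)"
  by (rule bij_betw_byWitness[where f' = "\<lambda>z. vadd z c"]) (auto simp: vadd_assoc)

lemma linear_part_length: "affine_perm s g \<Longrightarrow> length z = s \<Longrightarrow> length (linear_part s g z) = s"
  by (simp add: linear_part_def affine_perm_length)

lemma linear_part_zero: "affine_perm s g \<Longrightarrow> linear_part s g (zero s) = zero s"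
  by (simp add: linear_part_def affine_perm_length)

lemma affine_perm_eq_linear_part:
  "affine_perm s g \<Longrightarrow> length z = s \<Longrightarrow> g z = vadd (g (zero s)) (linear_part s g z)"
  by (simp add: linear_part_def affine_perm_length vadd_left_commute)

lemma linear_part_add:
  assumes g: "affine_perm s g" and "length x = s" "length y = s"
  shows "linear_part s g (vadd x y) = vadd (linear_part s g x) (linear_part s g y)"
proof -
  have "g (vadd x y) = vadd (vadd (g x) (g y)) (g (zero s))"
    using affine_perm_add3[OF g, of x y "zero s"] assms by simp
  then show ?thesis
    using assms affine_perm_length[OF g] unfolding linear_part_def by (intro nth_equalityI) auto
qed

lemma linear_perm_linear_part:
  assumes g: "affine_perm s g"
  shows "linear_perm s (linear_part s g)"
proof -
  have "bij_betw ((\<lambda>z. vadd z (g (zero s))) \<circ> g) (vecs s) (vecs s)"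
    using g affine_perm_length[OF g length_zero] unfolding affine_perm_def
    by (blast intro: bij_betw_trans bij_betw_vadd_right)
  then have "bij_betw (linear_part s g) (vecs s) (vecs s)"
    by (simp add: linear_part_def[abs_def] comp_def)
  then show ?thesis
    unfolding linear_perm_def using linear_part_add[OF g] by simp
qed

lemma affine_perm_linear_translate:
  assumes M: "linear_perm s M" and c: "length c = s"
  shows "affine_perm s (\<lambda>z. vadd (M z) c)"
proof -
  have "bij_betw ((\<lambda>z. vadd z c) \<circ> M) (vecs s) (vecs s)"
    using M c unfolding linear_perm_def by (blast intro: bij_betw_trans bij_betw_vadd_right)
  moreover have "vadd (M (vadd (vadd x y) z)) c = vadd (vadd (vadd (M x) c) (vadd (M y) c)) (vadd (M z) c)"
    if "length x = s" "length y = s" "length z = s" for x y z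
    using that c linear_perm_length[OF M] linear_perm_add[OF M]
    by (intro nth_equalityI) auto
  ultimately show ?thesis
    unfolding affine_perm_def by (simp add: comp_def)
qed

lemma linear_part_linear_translate:
  "linear_perm s M \<Longrightarrow> length c = s \<Longrightarrow> length z = s \<Longrightarrow> linear_part s (\<lambda>z. vadd (M z) c) z = M z"
  by (simp add: linear_part_def linear_perm_zero linear_perm_length vadd_ac)

lemma affine_perm_if_linear_perm:
  assumes "linear_perm s M"
  shows "affine_perm s M"
  using assms linear_perm_add[OF assms] unfolding linear_perm_def affine_perm_def by simp

lemma linear_part_linear_perm: "linear_perm s M \<Longrightarrow> length z = s \<Longrightarrow> linear_part s M z = M z"
  by (simp add: linear_part_def linear_perm_zero linear_perm_length)

lemma affine_perm_translate: "length c = s \<Longrightarrow> affine_perm s (\<lambda>z. vadd z c)"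
  using affine_perm_linear_translate[OF linear_perm_id] .

lemma linear_part_translate: "length c = s \<Longrightarrow> length z = s \<Longrightarrow> linear_part s (\<lambda>z. vadd z c) z = z"
  using linear_part_linear_translate[OF linear_perm_id] .

lemma card_image_affine_perm: "affine_perm s g \<Longrightarrow> X \<subseteq> vecs s \<Longrightarrow> card (g ` X) = card X"
  by (meson affine_perm_inj_on card_image inj_on_subset)

lemma vsum_image_affine_perm:
  assumes g: "affine_perm s g" and X: "X \<subseteq> vecs s"
  shows "vsum s (g ` X) = vadd (linear_part s g (vsum s X)) (if even (card X) then zero s else g (zero s))"
  using finite_subset_vecs[OF X] X
proof (induction X rule: finite_induct)
  case empty
  then show ?case
    using linear_part_zero[OF g] by simp
next
  case (insert x X)
  have x: "length x = s" and X: "X \<subseteq> vecs s"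
    using insert.prems by auto
  have "g x \<notin> g ` X"
    using affine_perm_inj_on[OF g] insert x X by (auto dest: inj_onD)
  then have "vsum s (g ` insert x X) = vadd (g x) (vsum s (g ` X))"
    using insert affine_perm_length[OF g x] by (simp add: vsum_insert)
  moreover have "linear_part s g (vsum s (insert x X)) = vadd (linear_part s g x) (linear_part s g (vsum s X))"
    using insert x by (simp add: vsum_insert linear_part_add[OF g])
  ultimately show ?case
    using insert.IH[OF X] insert x affine_perm_length[OF g]
    by (intro nth_equalityI) (auto simp: linear_part_def)
qed

lemma vsum_image_affine_perm_even:
  "affine_perm s g \<Longrightarrow> X \<subseteq> vecs s \<Longrightarrow> even (card X) \<Longrightarrow> vsum s (g ` X) = linear_part s g (vsum s X)"
  by (simp add: vsum_image_affine_perm linear_part_length)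

definition PAut :: "'p set \<Rightarrow> 'p set set \<Rightarrow> ('p \<Rightarrow> 'p) set" where
  "PAut N C = {\<pi>. bij_betw \<pi> N N \<and> (\<lambda>y. \<pi> ` y) ` C = C}"

lemma coord_transitive_iff: "coord_transitive N C \<longleftrightarrow> (\<forall>i\<in>N. \<forall>j\<in>N. \<exists>\<pi>\<in>PAut N C. \<pi> i = j)"
  by (auto simp: coord_transitive_def PAut_def)

lemma point_transitive_iff: "point_transitive P B \<longleftrightarrow> (\<forall>p\<in>P. \<forall>q\<in>P. \<exists>\<sigma>\<in>PAut P B. \<sigma> p = q)"
  by (auto simp: point_transitive_def PAut_def)

lemma PAut_comp:
  assumes "\<pi> \<in> PAut N C" "\<sigma> \<in> PAut N C"
  shows "\<sigma> \<circ> \<pi> \<in> PAut N C"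
proof -
  have "(\<lambda>y. (\<sigma> \<circ> \<pi>) ` y) ` C = (\<lambda>y. \<sigma> ` y) ` (\<lambda>y. \<pi> ` y) ` C"
    by (simp add: image_image image_comp[symmetric])
  then show ?thesis
    using assms by (auto simp: PAut_def intro: bij_betw_trans)
qed

lemma inj_on_image_family: "inj_on \<pi> N \<Longrightarrow> \<forall>W\<in>C. W \<subseteq> N \<Longrightarrow> inj_on (\<lambda>W. \<pi> ` W) C"
  by (rule inj_onI) (simp add: inj_on_image_eq_iff)

lemma PAut_inv:
  assumes \<pi>: "\<pi> \<in> PAut N C" and C: "\<forall>W\<in>C. W \<subseteq> N"
  shows "inv_into N \<pi> \<in> PAut N C"
proof -
  have bij: "bij_betw \<pi> N N" and img: "(\<lambda>y. \<pi> ` y) ` C = C"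
    using \<pi> by (auto simp: PAut_def)
  have cancel: "inv_into N \<pi> ` \<pi> ` W = W" if "W \<in> C" for W
    using bij C that unfolding bij_betw_def by (intro inv_into_image_cancel) auto
  have "(\<lambda>y. inv_into N \<pi> ` y) ` C = C"
  proof (intro equalityI subsetI)
    fix V assume "V \<in> (\<lambda>y. inv_into N \<pi> ` y) ` C"
    then obtain W where W: "W \<in> C" "V = inv_into N \<pi> ` W"
      by blast
    then obtain W' where "W' \<in> C" "W = \<pi> ` W'"
      using img by (metis imageE)
    then show "V \<in> C"
      using W cancel by metis
  next
    fix W assume "W \<in> C"
    then have "\<pi> ` W \<in> C" "W = inv_into N \<pi> ` \<pi> ` W"
      using img cancel[symmetric] by blast+
    then show "W \<in> (\<lambda>y. inv_into N \<pi> ` y) ` C"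
      by (rule rev_image_eqI)
  qed
  then show ?thesis
    using bij_betw_inv_into[OF bij] by (simp add: PAut_def)
qed

lemma PAut_image_in_iff:
  assumes "\<pi> \<in> PAut N C" "\<forall>W\<in>C. W \<subseteq> N" "V \<subseteq> N"
  shows "\<pi> ` V \<in> C \<longleftrightarrow> V \<in> C"
proof
  have inj: "inj_on \<pi> N" and img: "(\<lambda>y. \<pi> ` y) ` C = C"
    using assms(1) by (auto simp: PAut_def bij_betw_def)
  assume "\<pi> ` V \<in> C"
  then obtain V' where V': "V' \<in> C" "\<pi> ` V = \<pi> ` V'"
    using img by (metis imageE)
  then have "V = V'"
    using inj_on_image_eq_iff[OF inj assms(3)] assms(2) by blast
  then show "V \<in> C"
    using V'(1) by simp
next
  assume "V \<in> C"
  then show "\<pi> ` V \<in> C"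
    using assms(1) by (auto simp: PAut_def)
qed

lemma PAut_cong:
  assumes \<pi>: "\<pi> \<in> PAut N C" and C: "\<forall>W\<in>C. W \<subseteq> N" and eq: "\<And>p. p \<in> N \<Longrightarrow> \<pi> p = \<pi>' p"
  shows "\<pi>' \<in> PAut N C"
proof -
  have "bij_betw \<pi>' N N"
    using \<pi> bij_betw_cong[of N \<pi> \<pi>' N] eq by (simp add: PAut_def)
  moreover have "\<pi>' ` W = \<pi> ` W" if "W \<in> C" for W
  proof (rule image_cong[OF refl])
    fix p assume "p \<in> W"
    then have "p \<in> N"
      using C that by blast
    then show "\<pi>' p = \<pi> p"
      using eq by simp
  qed
  then have "(\<lambda>y. \<pi>' ` y) ` C = (\<lambda>y. \<pi> ` y) ` C"
    by (rule image_cong[OF refl])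
  ultimately show ?thesis
    using \<pi> by (simp add: PAut_def)
qed

lemma coord_transitiveI:
  assumes p0: "p0 \<in> N" and C: "\<forall>W\<in>C. W \<subseteq> N"
    and reach: "\<And>i. i \<in> N \<Longrightarrow> \<exists>\<pi>\<in>PAut N C. \<pi> p0 = i"
  shows "coord_transitive N C"
  unfolding coord_transitive_iff
proof (intro ballI)
  fix i j assume "i \<in> N" "j \<in> N"
  then obtain \<pi> \<sigma> where \<pi>: "\<pi> \<in> PAut N C" "\<pi> p0 = i" and \<sigma>: "\<sigma> \<in> PAut N C" "\<sigma> p0 = j"
    using reach by blast
  have "inv_into N \<pi> i = p0"
    unfolding \<pi>(2)[symmetric] using \<pi>(1) p0 by (simp add: PAut_def bij_betw_def inv_into_f_f)
  then show "\<exists>\<tau>\<in>PAut N C. \<tau> i = j"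
    using \<sigma>(2) by (intro bexI[OF _ PAut_comp[OF PAut_inv[OF \<pi>(1) C] \<sigma>(1)]]) simp
qed

lemma PAut_weight:
  assumes \<pi>: "\<pi> \<in> PAut N C" and C: "\<forall>W\<in>C. W \<subseteq> N"
  shows "\<pi> \<in> PAut N {W \<in> C. card W = k}"
proof -
  have bij: "bij_betw \<pi> N N" and img: "(\<lambda>y. \<pi> ` y) ` C = C"
    using \<pi> by (auto simp: PAut_def)
  have card: "card (\<pi> ` W) = card W" if "W \<in> C" for W
    using bij C that by (meson bij_betw_def card_image inj_on_subset)
  have "(\<lambda>y. \<pi> ` y) ` {W \<in> C. card W = k} = {W \<in> C. card W = k}"
  proof (intro equalityI subsetI)
    fix V assume "V \<in> (\<lambda>y. \<pi> ` y) ` {W \<in> C. card W = k}"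
    then show "V \<in> {W \<in> C. card W = k}"
      using img card by auto
  next
    fix V assume V: "V \<in> {W \<in> C. card W = k}"
    then obtain W where "W \<in> C" "V = \<pi> ` W"
      using img by (metis (no_types, lifting) imageE mem_Collect_eq)
    then show "V \<in> (\<lambda>y. \<pi> ` y) ` {W \<in> C. card W = k}"
      using V card by auto
  qed
  then show ?thesis
    using bij by (simp add: PAut_def)
qed

lemma point_transitive_weight_if_coord_transitive:
  assumes C: "\<forall>W\<in>C. W \<subseteq> N" and "coord_transitive N C"
  shows "point_transitive N {W \<in> C. card W = k}"
  unfolding point_transitive_iff
proof (intro ballI)
  fix p q assume "p \<in> N" "q \<in> N"
  then obtain \<pi> where "\<pi> \<in> PAut N C" "\<pi> p = q"
    using \<open>coord_transitive N C\<close> unfolding coord_transitive_iff by blast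
  then show "\<exists>\<sigma>\<in>PAut N {W \<in> C. card W = k}. \<sigma> p = q"
    using PAut_weight[OF _ C] by blast
qed

section \<open>Automorphisms of \<open>S\<^sub>\<rho>\<close> built from affine permutations\<close>

definition cross_map :: "('a \<Rightarrow> 'b) \<Rightarrow> ('c \<Rightarrow> 'd) \<Rightarrow> 'a + 'c \<Rightarrow> 'd + 'b" where
  "cross_map g h = case_sum (Inr \<circ> g) (Inl \<circ> h)"

lemma cross_map_simps [simp]:
  "cross_map g h (Inl a) = Inr (g a)" "cross_map g h (Inr b) = Inl (h b)"
  by (simp_all add: cross_map_def)

lemma image_cross_map_Plus [simp]: "cross_map g h ` (A <+> B) = h ` B <+> g ` A"
  by (simp add: Plus_def image_Un image_image Un_commute)

lemma bij_betw_cross_map: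
  assumes "bij_betw g A A'" "bij_betw h B B'"
  shows "bij_betw (cross_map g h) (A <+> B) (B' <+> A')"
proof (rule bij_betw_imageI)
  have "inj_on g A" "inj_on h B"
    using assms by (simp_all add: bij_betw_def)
  then show "inj_on (cross_map g h) (A <+> B)"
    by (intro inj_onI) (auto elim!: PlusE dest: inj_onD)
  show "cross_map g h ` (A <+> B) = B' <+> A'"
    using assms unfolding bij_betw_def by simp
qed

lemma bij_betw_positions_map_sum:
  "affine_perm s g \<Longrightarrow> affine_perm s h \<Longrightarrow> bij_betw (map_sum g h) (positions s) (positions s)"
  by (simp add: positions_eq_Plus bij_betw_map_sum affine_perm_def)

lemma bij_betw_positions_cross_map:
  "affine_perm s g \<Longrightarrow> affine_perm s h \<Longrightarrow> bij_betw (cross_map g h) (positions s) (positions s)"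
  by (simp add: positions_eq_Plus bij_betw_cross_map affine_perm_def)

lemma image_affine_perm_subset: "affine_perm s g \<Longrightarrow> X \<subseteq> vecs s \<Longrightarrow> g ` X \<subseteq> vecs s"
  using affine_perm_length by fastforce

lemma map_sum_translate_sum_code:
  assumes g: "affine_perm s g" and h: "affine_perm s h" and x: "X0 <+> Y0 \<in> sum_code s \<rho>"
    and compat: "\<And>b. length b = s \<Longrightarrow>
      \<rho> (vadd (vsum s X0) (linear_part s g b)) = vadd (vsum s Y0) (linear_part s h (\<rho> b))"
  shows "(\<lambda>W. symd (X0 <+> Y0) (map_sum g h ` W)) ` sum_code s \<rho> = sum_code s \<rho>"
proof (rule endo_inj_surj[OF finite_sum_code])
  have X0: "X0 \<subseteq> vecs s" "Y0 \<subseteq> vecs s" "even (card X0)" "even (card Y0)"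
    using x by simp_all
  show "(\<lambda>W. symd (X0 <+> Y0) (map_sum g h ` W)) ` sum_code s \<rho> \<subseteq> sum_code s \<rho>"
  proof (rule image_subsetI)
    fix W assume "W \<in> sum_code s \<rho>"
    then obtain X Y where W: "W = X <+> Y" "X \<subseteq> vecs s" "Y \<subseteq> vecs s" "even (card X)" "even (card Y)"
      "vsum s Y = \<rho> (vsum s X)"
      by (rule sum_codeE)
    have fin: "finite X0" "finite Y0" "finite (g ` X)" "finite (h ` Y)"
      using X0 W finite_subset_vecs by auto
    have "vsum s (symd Y0 (h ` Y)) = vadd (vsum s Y0) (linear_part s h (\<rho> (vsum s X)))"
      using fin W by (simp add: vsum_symd vsum_image_affine_perm_even[OF h])
    also have "\<dots> = \<rho> (vadd (vsum s X0) (linear_part s g (vsum s X)))"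
      using compat[of "vsum s X"] by simp
    also have "\<dots> = \<rho> (vsum s (symd X0 (g ` X)))"
      using fin W by (simp add: vsum_symd vsum_image_affine_perm_even[OF g])
    finally have sum: "vsum s (symd Y0 (h ` Y)) = \<rho> (vsum s (symd X0 (g ` X)))" .
    have "symd X0 (g ` X) \<subseteq> vecs s" "symd Y0 (h ` Y) \<subseteq> vecs s"
      using X0 image_affine_perm_subset[OF g W(2)] image_affine_perm_subset[OF h W(3)]
      by (simp_all add: symd_subset)
    moreover have "even (card (symd X0 (g ` X)))" "even (card (symd Y0 (h ` Y)))"
      using X0 W fin by (simp_all add: even_card_symd_iff card_image_affine_perm[OF g] card_image_affine_perm[OF h])
    moreover have "symd (X0 <+> Y0) (map_sum g h ` W) = symd X0 (g ` X) <+> symd Y0 (h ` Y)"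
      using W(1) by (simp add: symd_Plus)
    ultimately show "symd (X0 <+> Y0) (map_sum g h ` W) \<in> sum_code s \<rho>"
      using sum by simp
  qed
  have inj: "inj_on (\<lambda>W. map_sum g h ` W) (sum_code s \<rho>)"
    using bij_betw_positions_map_sum[OF g h] sum_code_subset_positions
    by (intro inj_on_image_family) (auto simp: bij_betw_def)
  show "inj_on (\<lambda>W. symd (X0 <+> Y0) (map_sum g h ` W)) (sum_code s \<rho>)"
  proof (rule inj_onI)
    fix W1 W2 assume "W1 \<in> sum_code s \<rho>" "W2 \<in> sum_code s \<rho>"
      and "symd (X0 <+> Y0) (map_sum g h ` W1) = symd (X0 <+> Y0) (map_sum g h ` W2)"
    then show "W1 = W2"
      using inj by (metis inj_onD symd_cancel_left)
  qed
qed

lemma map_sum_in_PAut_sum_code: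
  assumes \<rho>: "perm_fix0 s \<rho>" and g: "affine_perm s g" and h: "affine_perm s h"
    and compat: "\<And>b. length b = s \<Longrightarrow> \<rho> (linear_part s g b) = linear_part s h (\<rho> b)"
  shows "map_sum g h \<in> PAut (positions s) (sum_code s \<rho>)"
proof -
  have "(\<lambda>W. symd ({} <+> {}) (map_sum g h ` W)) ` sum_code s \<rho> = sum_code s \<rho>"
    using \<rho> compat
    by (intro map_sum_translate_sum_code[OF g h])
       (simp_all add: empty_in_sum_code perm_fix0_length linear_part_length[OF g] linear_part_length[OF h])
  then show ?thesis
    using bij_betw_positions_map_sum[OF g h] by (simp add: PAut_def)
qed

lemma cross_map_in_PAut_sum_code:
  assumes g: "affine_perm s g" and h: "affine_perm s h"
    and compat: "\<And>b. length b = s \<Longrightarrow> \<rho> (linear_part s h (\<rho> b)) = linear_part s g b"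
  shows "cross_map g h \<in> PAut (positions s) (sum_code s \<rho>)"
proof -
  have "(\<lambda>W. cross_map g h ` W) ` sum_code s \<rho> = sum_code s \<rho>"
  proof (rule endo_inj_surj[OF finite_sum_code])
    show "(\<lambda>W. cross_map g h ` W) ` sum_code s \<rho> \<subseteq> sum_code s \<rho>"
    proof (rule image_subsetI)
      fix W assume "W \<in> sum_code s \<rho>"
      then obtain X Y where W: "W = X <+> Y" "X \<subseteq> vecs s" "Y \<subseteq> vecs s" "even (card X)" "even (card Y)"
        "vsum s Y = \<rho> (vsum s X)"
        by (rule sum_codeE)
      have "vsum s (g ` X) = \<rho> (vsum s (h ` Y))"
        using W compat[of "vsum s X"]
        by (simp add: vsum_image_affine_perm_even[OF g] vsum_image_affine_perm_even[OF h])
      then show "cross_map g h ` W \<in> sum_code s \<rho>"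
        using W image_affine_perm_subset[OF g W(2)] image_affine_perm_subset[OF h W(3)]
        by (simp add: card_image_affine_perm[OF g] card_image_affine_perm[OF h])
    qed
    show "inj_on (\<lambda>W. cross_map g h ` W) (sum_code s \<rho>)"
      using bij_betw_positions_cross_map[OF g h] sum_code_subset_positions
      by (intro inj_on_image_family) (auto simp: bij_betw_def)
  qed
  then show ?thesis
    using bij_betw_positions_cross_map[OF g h] by (simp add: PAut_def)
qed

text \<open>What makes \<open>cross_map N M\<close> an automorphism of \<open>S\<^sub>\<rho>\<close> for linear \<open>M, N\<close>
  (\<open>cross_map_in_PAut_sum_code\<close>); it turns out to be equivalent to point transitivity of \<open>SQS\<^sub>\<rho>\<close>.\<close>

definition swappable :: "nat \<Rightarrow> (bool list \<Rightarrow> bool list) \<Rightarrow> bool" where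
  "swappable s \<rho> \<longleftrightarrow> (\<exists>M N. linear_perm s M \<and> linear_perm s N \<and> (\<forall>x\<in>vecs s. \<rho> (M (\<rho> x)) = N x))"

lemma coord_transitive_sum_code_if_swappable:
  assumes \<rho>: "perm_fix0 s \<rho>" and "swappable s \<rho>"
  shows "coord_transitive (positions s) (sum_code s \<rho>)"
proof (rule coord_transitiveI)
  show "Inl (zero s) \<in> positions s" "\<forall>W\<in>sum_code s \<rho>. W \<subseteq> positions s"
    using sum_code_subset_positions by (auto simp: positions_eq_Plus)
  obtain M N where M: "linear_perm s M" and N: "linear_perm s N" and MN: "\<forall>x\<in>vecs s. \<rho> (M (\<rho> x)) = N x"
    using \<open>swappable s \<rho>\<close> by (auto simp: swappable_def)
  fix i assume "i \<in> positions s"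
  then consider (left) q where "i = Inl q" "length q = s" | (right) q where "i = Inr q" "length q = s"
    by (auto simp: positions_eq_Plus elim: PlusE)
  then show "\<exists>\<pi>\<in>PAut (positions s) (sum_code s \<rho>). \<pi> (Inl (zero s)) = i"
  proof cases
    case (left q)
    have "map_sum (\<lambda>z. vadd z q) (\<lambda>z. z) \<in> PAut (positions s) (sum_code s \<rho>)"
      using \<rho> left(2) affine_perm_if_linear_perm[OF linear_perm_id]
      by (intro map_sum_in_PAut_sum_code)
         (simp_all add: affine_perm_translate linear_part_translate linear_part_linear_perm[OF linear_perm_id]
           perm_fix0_length)
    then show ?thesis
      using left by (intro bexI) simp_all
  next
    case (right q)
    have "cross_map (\<lambda>z. vadd (N z) q) M \<in> PAut (positions s) (sum_code s \<rho>)"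
      using right(2) \<rho> MN
      by (intro cross_map_in_PAut_sum_code affine_perm_linear_translate[OF N] affine_perm_if_linear_perm[OF M])
         (simp_all add: linear_part_linear_translate[OF N] linear_part_linear_perm[OF M] perm_fix0_length)
    then show ?thesis
      using right by (intro bexI) (simp_all add: linear_perm_zero[OF N])
  qed
qed

section \<open>Point transitivity of \<open>SQS\<^sub>\<rho>\<close> forces \<open>\<rho>\<close> to be swappable\<close>

text \<open>Every three distinct vectors \<open>a, b, c\<close> lie in the zero-sum quadruple \<open>{a, b, c, a + b + c}\<close>.\<close>

lemma affine_perm_if_preserves_zero_quads:
  assumes bij: "bij_betw f (vecs s) (vecs s)"
    and quad: "\<And>X. X \<subseteq> vecs s \<Longrightarrow> card X = 4 \<Longrightarrow> vsum s X = zero s \<Longrightarrow> vsum s (f ` X) = zero s"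
  shows "affine_perm s f"
  unfolding affine_perm_def
proof (intro conjI bij ballI)
  fix a b c assume abc: "a \<in> vecs s" "b \<in> vecs s" "c \<in> vecs s"
  have f: "length (f a) = s" "length (f b) = s" "length (f c) = s"
    using abc bij_betw_vecs_length[OF bij] by auto
  show "f (vadd (vadd a b) c) = vadd (vadd (f a) (f b)) (f c)"
  proof (cases "a = b \<or> a = c \<or> b = c")
    case True
    then show ?thesis
      using abc f by (auto simp: vadd_ac)
  next
    case False
    define d where "d = vadd (vadd a b) c"
    have d: "length d = s" "distinct [a, b, c, d]"
      using False abc vadd_vadd_eq_left_iff[of a s b c] vadd_vadd_eq_left_iff[of b s a c]
        vadd_vadd_eq_left_iff[of c s a b]
      by (auto simp: d_def vadd_ac)
    have "vsum s {a, b, c, d} = zero s"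
      using abc d by (simp add: vsum_four vadd4_eq_zero_iff d_def)
    then have "vsum s {f a, f b, f c, f d} = zero s"
      using quad[of "{a, b, c, d}"] abc d by simp
    moreover have "distinct [f a, f b, f c, f d]"
      using d abc bij by (auto simp: bij_betw_def inj_on_eq_iff)
    ultimately show ?thesis
      using f d bij_betw_vecs_length[OF bij, of d] by (simp add: vsum_four vadd4_eq_zero_iff d_def)
  qed
qed

lemma bij_betw_Plus_left_to_rightE:
  assumes bij: "bij_betw \<sigma> (A <+> A) (A <+> A)" and fin: "finite A"
    and left: "\<And>a. a \<in> A \<Longrightarrow> \<exists>b. \<sigma> (Inl a) = Inr b"
  obtains \<alpha> \<beta> where "bij_betw \<alpha> A A" "bij_betw \<beta> A A" "\<And>p. p \<in> A <+> A \<Longrightarrow> \<sigma> p = cross_map \<alpha> \<beta> p"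
proof -
  define \<alpha> where "\<alpha> a = projr (\<sigma> (Inl a))" for a
  define \<beta> where "\<beta> a = projl (\<sigma> (Inr a))" for a
  have inj: "inj_on \<sigma> (A <+> A)" and into: "\<And>p. p \<in> A <+> A \<Longrightarrow> \<sigma> p \<in> A <+> A"
    using bij by (auto simp: bij_betw_def)
  have \<sigma>\<alpha>: "\<sigma> (Inl a) = Inr (\<alpha> a)" if "a \<in> A" for a
    using left[OF that] by (auto simp: \<alpha>_def)
  have inj\<alpha>: "inj_on \<alpha> A"
    using inj by (intro inj_onI) (metis \<sigma>\<alpha> InlI inj_on_eq_iff sum.inject(1))
  have "\<alpha> ` A \<subseteq> A"
    using into \<sigma>\<alpha> by (metis InlI Inr_in_Plus_iff image_subsetI)
  then have \<alpha>A: "\<alpha> ` A = A"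
    using endo_inj_surj[OF fin _ inj\<alpha>] by simp
  have \<sigma>\<beta>: "\<sigma> (Inr a) = Inl (\<beta> a)" if a: "a \<in> A" for a
  proof (cases "\<sigma> (Inr a)")
    case (Inl b)
    then show ?thesis
      by (simp add: \<beta>_def)
  next
    case (Inr b)
    then have "b \<in> \<alpha> ` A"
      using into[of "Inr a"] a \<alpha>A by auto
    then obtain a' where "a' \<in> A" "\<sigma> (Inl a') = \<sigma> (Inr a)"
      using Inr \<sigma>\<alpha> by auto
    then show ?thesis
      using inj a by (metis InlI InrI inj_on_eq_iff sum.distinct(1))
  qed
  have inj\<beta>: "inj_on \<beta> A"
    using inj by (intro inj_onI) (metis \<sigma>\<beta> InrI inj_on_eq_iff sum.inject(2))
  have "\<beta> ` A \<subseteq> A"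
    using into \<sigma>\<beta> by (metis InrI Inl_in_Plus_iff image_subsetI)
  then have "\<beta> ` A = A"
    using endo_inj_surj[OF fin _ inj\<beta>] by simp
  show ?thesis
  proof
    show "bij_betw \<alpha> A A" "bij_betw \<beta> A A"
      using inj\<alpha> \<alpha>A inj\<beta> \<open>\<beta> ` A = A\<close> by (simp_all add: bij_betw_def)
    show "\<sigma> p = cross_map \<alpha> \<beta> p" if "p \<in> A <+> A" for p
      using that \<sigma>\<alpha> \<sigma>\<beta> by (auto elim: PlusE)
  qed
qed

lemma vsum_left_half_of_weight4:
  assumes \<rho>: "perm_fix0 s \<rho>" and W: "X <+> Y \<in> sum_code s \<rho>" "card (X <+> Y) = 4"
    and uv: "u \<in> X" "v \<in> X" "u \<noteq> v"
  shows "vsum s X = zero s \<or> vsum s X = vadd u v"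
proof -
  have XY: "X \<subseteq> vecs s" "Y \<subseteq> vecs s" "even (card X)" and sum: "vsum s Y = \<rho> (vsum s X)"
    using W(1) by simp_all
  then have fin: "finite X" "finite Y"
    using finite_subset_vecs by blast+
  have card: "card X + card Y = 4"
    using W(2) fin by (simp add: card_Plus)
  have "card {u, v} \<le> card X"
    using uv fin by (intro card_mono) auto
  then have "card X = 2 \<or> card X = 4"
    using XY(3) card uv(3) by auto
  then show ?thesis
  proof
    assume "card X = 2"
    then have "X = {u, v}"
      using uv fin by (intro card_subset_eq[symmetric]) auto
    then show ?thesis
      using uv XY by (simp add: vsum_doubleton)
  next
    assume "card X = 4"
    then have "\<rho> (vsum s X) = zero s"
      using sum card fin by simp
    then show ?thesis
      using \<rho> by (simp add: perm_fix0_eq_zero_iff)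
  qed
qed

lemma symd_weight4_in_sum_code:
  assumes \<rho>: "perm_fix0 s \<rho>" and A: "A \<in> sum_code s \<rho>" "card A = 4" and B: "B \<in> sum_code s \<rho>" "card B = 4"
    and AB: "A \<inter> B = {Inl u, Inl v}" and uv: "u \<noteq> v"
  shows "symd A B \<in> sum_code s \<rho> \<and> card (symd A B) = 4"
proof
  obtain XA YA where A': "A = XA <+> YA" "XA \<subseteq> vecs s" "YA \<subseteq> vecs s" "even (card XA)"
      "even (card YA)" "vsum s YA = \<rho> (vsum s XA)"
    using A(1) by (rule sum_codeE)
  obtain XB YB where B': "B = XB <+> YB" "XB \<subseteq> vecs s" "YB \<subseteq> vecs s" "even (card XB)"
      "even (card YB)" "vsum s YB = \<rho> (vsum s XB)"
    using B(1) by (rule sum_codeE)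
  have "Inl u \<in> A" "Inl v \<in> A" "Inl u \<in> B" "Inl v \<in> B"
    using AB by blast+
  then have uvX: "u \<in> XA" "v \<in> XA" "u \<in> XB" "v \<in> XB"
    using A'(1) B'(1) by simp_all
  have "length u = s" "length v = s"
    using uvX(1,2) A'(2) by (auto dest: subsetD)
  then have len: "length u = s" "length (vadd u v) = s" "length (\<rho> (vadd u v)) = s"
    using \<rho> by (simp_all add: perm_fix0_length)
  have fin: "finite XA" "finite YA" "finite XB" "finite YB"
    using A' B' finite_subset_vecs by blast+
  have "vsum s XA = zero s \<or> vsum s XA = vadd u v" "vsum s XB = zero s \<or> vsum s XB = vadd u v"
    using vsum_left_half_of_weight4[OF \<rho>] A B A'(1) B'(1) uvX uv by auto
  then have "\<rho> (vadd (vsum s XA) (vsum s XB)) = vadd (\<rho> (vsum s XA)) (\<rho> (vsum s XB))"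
    using \<rho> len by (elim disjE) (simp_all add: perm_fix0_zero)
  then have "vsum s (symd YA YB) = \<rho> (vsum s (symd XA XB))"
    using fin A'(6) B'(6) by (simp add: vsum_symd)
  moreover have "symd A B = symd XA XB <+> symd YA YB"
    using A'(1) B'(1) by (simp add: symd_Plus)
  ultimately show "symd A B \<in> sum_code s \<rho>"
    using A' B' fin by (simp add: symd_subset even_card_symd_iff)
  have "card (A \<inter> B) = 2"
    using AB uv by simp
  then show "card (symd A B) = 4"
    using card_symd[of A B] A B fin A'(1) B'(1) by simp
qed

lemma SQS_blocks_subset_positions: "perm_fix0 s \<rho> \<Longrightarrow> \<forall>W\<in>SQS_blocks s \<rho>. W \<subseteq> positions s"
  using sum_code_subset_positions by (auto simp: SQS_blocks_eq_weight4)

lemma nonadditive_SQS_blocksE: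
  assumes \<rho>: "perm_fix0 s \<rho>" and x: "length x = s" and y: "length y = s"
    and nonadd: "\<rho> (vadd x y) \<noteq> vadd (\<rho> x) (\<rho> y)" and w: "length w = s"
  obtains B1 B2 where "B1 \<in> SQS_blocks s \<rho>" "B2 \<in> SQS_blocks s \<rho>"
    "B1 \<inter> B2 = {Inl w, Inr (zero s)}" "symd B1 B2 \<notin> SQS_blocks s \<rho>"
proof
  have \<rho>0: "\<rho> (zero s) = zero s" and len: "length (\<rho> x) = s" "length (\<rho> y) = s"
    using \<rho> x y by (simp_all add: perm_fix0_zero perm_fix0_length)
  have xy: "x \<noteq> zero s" "y \<noteq> zero s" "x \<noteq> y"
    using nonadd x y \<rho>0 len by (metis vadd_zero_left vadd_zero_right vadd_self)+
  then have \<rho>xy: "\<rho> x \<noteq> zero s" "\<rho> y \<noteq> zero s" "\<rho> x \<noteq> \<rho> y"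
    using \<rho> x y by (simp_all add: perm_fix0_eq_zero_iff perm_fix0_eq_iff)
  have wxy: "vadd w x \<noteq> w" "vadd w y \<noteq> w" "vadd w x \<noteq> vadd w y"
    using w x y xy by (simp_all add: vadd_eq_left_iff vadd_left_cancel_iff)
  let ?B1 = "{Inl w, Inl (vadd w x), Inr (zero s), Inr (\<rho> x)}"
  let ?B2 = "{Inl w, Inl (vadd w y), Inr (zero s), Inr (\<rho> y)}"
  show "?B1 \<in> SQS_blocks s \<rho>" "?B2 \<in> SQS_blocks s \<rho>"
    using w x y len \<rho>xy by (auto intro!: SQS_blocks_mixedI)
  show "?B1 \<inter> ?B2 = {Inl w, Inr (zero s)}"
    using wxy \<rho>xy by auto
  have "symd ?B1 ?B2 = {vadd w x, vadd w y} <+> {\<rho> x, \<rho> y}"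
    using wxy \<rho>xy by (auto simp: symd_def Plus_def)
  moreover have "vadd (vadd w x) (vadd w y) = vadd x y"
    using w x y by (intro nth_equalityI) auto
  ultimately show "symd ?B1 ?B2 \<notin> SQS_blocks s \<rho>"
    using nonadd wxy \<rho>xy w x y len by (simp add: SQS_blocks_eq_weight4[OF \<rho>] vsum_doubleton)
qed

text \<open>If \<open>\<sigma>\<close> kept \<open>Inl z\<close> in the left half, the two blocks of \<open>nonadditive_SQS_blocksE\<close> through
  \<open>\<sigma> (Inl z)\<close> and \<open>\<sigma> (Inl 0) = Inr 0\<close> would pull back to blocks meeting in two left points. Their
  symmetric difference is then a block by \<open>symd_weight4_in_sum_code\<close>, and so is its image.\<close>

lemma PAut_SQS_blocks_moves_left_to_right:
  assumes \<rho>: "perm_fix0 s \<rho>" and x: "length x = s" and y: "length y = s"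
    and nonadd: "\<rho> (vadd x y) \<noteq> vadd (\<rho> x) (\<rho> y)"
    and \<sigma>: "\<sigma> \<in> PAut (positions s) (SQS_blocks s \<rho>)" and \<sigma>0: "\<sigma> (Inl (zero s)) = Inr (zero s)"
    and z: "length z = s"
  shows "\<exists>w. \<sigma> (Inl z) = Inr w"
proof (rule ccontr)
  let ?P = "positions s" and ?B = "SQS_blocks s \<rho>"
  have BP: "\<forall>W\<in>?B. W \<subseteq> ?P"
    using \<rho> by (rule SQS_blocks_subset_positions)
  have bij: "bij_betw \<sigma> ?P ?P"
    using \<sigma> by (simp add: PAut_def)
  have zP: "Inl z \<in> ?P" "Inl (zero s) \<in> ?P"
    using z by (simp_all add: positions_eq_Plus)
  assume "\<nexists>w. \<sigma> (Inl z) = Inr w"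
  then obtain w where \<sigma>z: "\<sigma> (Inl z) = Inl w"
    by (cases "\<sigma> (Inl z)") auto
  have "Inl w \<in> ?P"
    using bij_betwE[OF bij] zP(1) \<sigma>z by metis
  then obtain B1 B2 where B12: "B1 \<in> ?B" "B2 \<in> ?B" and B1B2: "B1 \<inter> B2 = {Inl w, Inr (zero s)}"
    and Q: "symd B1 B2 \<notin> ?B"
    using nonadditive_SQS_blocksE[OF \<rho> x y nonadd] by (auto simp: positions_eq_Plus)
  have sub: "B1 \<subseteq> ?P" "B2 \<subseteq> ?P"
    using BP B12 by blast+
  define \<tau> where "\<tau> = inv_into ?P \<sigma>"
  have \<tau>: "\<tau> \<in> PAut ?P ?B"
    unfolding \<tau>_def by (rule PAut_inv[OF \<sigma> BP])
  then have inj: "inj_on \<tau> ?P"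
    by (simp add: PAut_def bij_betw_def)
  have "\<tau> (Inl w) = Inl z" "\<tau> (Inr (zero s)) = Inl (zero s)"
    unfolding \<tau>_def using bij zP \<sigma>z \<sigma>0 by (metis bij_betw_def inv_into_f_f)+
  then have "\<tau> ` B1 \<inter> \<tau> ` B2 = {Inl z, Inl (zero s)}"
    using inj_on_image_Int[OF inj sub] B1B2 by simp
  moreover have "z \<noteq> zero s"
    using \<sigma>z \<sigma>0 by auto
  moreover have "\<tau> ` B1 \<in> ?B" "\<tau> ` B2 \<in> ?B"
    using PAut_image_in_iff[OF \<tau> BP] sub B12 by simp_all
  ultimately have "symd (\<tau> ` B1) (\<tau> ` B2) \<in> ?B"
    using symd_weight4_in_sum_code[OF \<rho>] by (simp add: SQS_blocks_eq_weight4[OF \<rho>])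
  then have "\<tau> ` symd B1 B2 \<in> ?B"
    using image_symd[OF inj sub] by simp
  then show False
    using Q PAut_image_in_iff[OF \<tau> BP] symd_subset[OF sub] by blast
qed

lemma swappable_if_additive:
  assumes \<rho>: "perm_fix0 s \<rho>" and add: "\<forall>x\<in>vecs s. \<forall>y\<in>vecs s. \<rho> (vadd x y) = vadd (\<rho> x) (\<rho> y)"
  shows "swappable s \<rho>"
proof -
  have "bij_betw (\<rho> \<circ> \<rho>) (vecs s) (vecs s)"
    using \<rho> by (auto simp: perm_fix0_def intro: bij_betw_trans)
  then have "linear_perm s (\<rho> \<circ> \<rho>)"
    using add \<rho> by (simp add: linear_perm_def perm_fix0_length)
  then show ?thesis
    unfolding swappable_def by (intro exI[of _ "\<lambda>z. z"] exI[of _ "\<rho> \<circ> \<rho>"]) (simp add: linear_perm_id)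
qed

lemma cross_map_image_in_SQS_blocks:
  assumes \<rho>: "perm_fix0 s \<rho>" and \<sigma>: "cross_map \<alpha> \<beta> \<in> PAut (positions s) (SQS_blocks s \<rho>)"
    and "X <+> Y \<in> SQS_blocks s \<rho>" "X \<subseteq> vecs s" "Y \<subseteq> vecs s"
  shows "\<beta> ` Y <+> \<alpha> ` X \<in> SQS_blocks s \<rho>"
  using PAut_image_in_iff[OF \<sigma> SQS_blocks_subset_positions[OF \<rho>], of "X <+> Y"] assms(3-)
  by (simp add: positions_eq_Plus)

lemma affine_perms_if_cross_map_in_PAut:
  assumes \<rho>: "perm_fix0 s \<rho>" and \<alpha>: "bij_betw \<alpha> (vecs s) (vecs s)" and \<beta>: "bij_betw \<beta> (vecs s) (vecs s)"
    and \<sigma>: "cross_map \<alpha> \<beta> \<in> PAut (positions s) (SQS_blocks s \<rho>)"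
  shows "affine_perm s \<alpha>" "affine_perm s \<beta>"
proof -
  have B: "SQS_blocks s \<rho> = {W \<in> sum_code s \<rho>. card W = 4}"
    by (rule SQS_blocks_eq_weight4[OF \<rho>])
  note maps = cross_map_image_in_SQS_blocks[OF \<rho> \<sigma>]
  show "affine_perm s \<alpha>"
  proof (rule affine_perm_if_preserves_zero_quads[OF \<alpha>])
    fix X assume X: "X \<subseteq> vecs s" "card X = 4" "vsum s X = zero s"
    then have "X <+> {} \<in> SQS_blocks s \<rho>"
      using \<rho> B by (simp add: card_Plus finite_subset_vecs perm_fix0_zero)
    then have "{} <+> \<alpha> ` X \<in> SQS_blocks s \<rho>"
      using maps X(1) by fastforce
    then show "vsum s (\<alpha> ` X) = zero s"
      using \<rho> B by (simp add: perm_fix0_zero)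
  qed
  show "affine_perm s \<beta>"
  proof (rule affine_perm_if_preserves_zero_quads[OF \<beta>])
    fix X assume X: "X \<subseteq> vecs s" "card X = 4" "vsum s X = zero s"
    then have "{} <+> X \<in> SQS_blocks s \<rho>"
      using \<rho> B by (simp add: card_Plus finite_subset_vecs perm_fix0_zero)
    then have "\<beta> ` X <+> {} \<in> SQS_blocks s \<rho>"
      using maps X(1) by fastforce
    then have "\<rho> (vsum s (\<beta> ` X)) = zero s"
      using B by simp
    then show "vsum s (\<beta> ` X) = zero s"
      using \<rho> by (simp add: perm_fix0_eq_zero_iff)
  qed
qed

text \<open>The mixed blocks \<open>{0, b} <+> {0, \<rho> b}\<close> tie the linear parts of the two halves together.\<close>

lemma swappable_if_cross_map_in_PAut:
  assumes \<rho>: "perm_fix0 s \<rho>" and \<alpha>: "bij_betw \<alpha> (vecs s) (vecs s)" and \<beta>: "bij_betw \<beta> (vecs s) (vecs s)"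
    and \<sigma>: "cross_map \<alpha> \<beta> \<in> PAut (positions s) (SQS_blocks s \<rho>)"
  shows "swappable s \<rho>"
proof -
  have B: "SQS_blocks s \<rho> = {W \<in> sum_code s \<rho>. card W = 4}"
    by (rule SQS_blocks_eq_weight4[OF \<rho>])
  note aff = affine_perms_if_cross_map_in_PAut[OF assms]
  have "\<rho> (linear_part s \<beta> (\<rho> b)) = linear_part s \<alpha> b" if b: "length b = s" for b
  proof (cases "b = zero s")
    case True
    then show ?thesis
      using \<rho> aff by (simp add: linear_part_zero perm_fix0_zero)
  next
    case False
    have \<rho>b: "length (\<rho> b) = s" "\<rho> b \<noteq> zero s"
      using \<rho> b False by (simp_all add: perm_fix0_length perm_fix0_eq_zero_iff)
    then have "{zero s, b} <+> {zero s, \<rho> b} \<in> SQS_blocks s \<rho>"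
      using b False B by (simp add: card_Plus vsum_doubleton)
    then have "{\<beta> (zero s), \<beta> (\<rho> b)} <+> {\<alpha> (zero s), \<alpha> b} \<in> SQS_blocks s \<rho>"
      using cross_map_image_in_SQS_blocks[OF \<rho> \<sigma>] b \<rho>b by fastforce
    moreover have "\<alpha> (zero s) \<noteq> \<alpha> b" "\<beta> (zero s) \<noteq> \<beta> (\<rho> b)"
      using \<alpha> \<beta> b \<rho>b False by (auto simp: bij_betw_def inj_on_eq_iff)
    ultimately show ?thesis
      using B b \<rho>b bij_betw_vecs_length[OF \<alpha>] bij_betw_vecs_length[OF \<beta>]
      by (simp add: vsum_doubleton linear_part_def vadd_commute)
  qed
  then show ?thesis
    unfolding swappable_def using aff
    by (intro exI[of _ "linear_part s \<beta>"] exI[of _ "linear_part s \<alpha>"]) (simp add: linear_perm_linear_part)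
qed

lemma swappable_if_point_transitive:
  assumes \<rho>: "perm_fix0 s \<rho>" and pt: "point_transitive (positions s) (SQS_blocks s \<rho>)"
  shows "swappable s \<rho>"
proof (cases "\<forall>x\<in>vecs s. \<forall>y\<in>vecs s. \<rho> (vadd x y) = vadd (\<rho> x) (\<rho> y)")
  case True
  then show ?thesis
    by (rule swappable_if_additive[OF \<rho>])
next
  case False
  then obtain x y where nonadd: "length x = s" "length y = s" "\<rho> (vadd x y) \<noteq> vadd (\<rho> x) (\<rho> y)"
    by auto
  have "Inl (zero s) \<in> positions s" "Inr (zero s) \<in> positions s"
    by (simp_all add: positions_eq_Plus)
  then obtain \<sigma> where \<sigma>: "\<sigma> \<in> PAut (positions s) (SQS_blocks s \<rho>)" "\<sigma> (Inl (zero s)) = Inr (zero s)"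
    using pt unfolding point_transitive_iff by blast
  have "bij_betw \<sigma> (vecs s <+> vecs s) (vecs s <+> vecs s)"
    using \<sigma>(1) by (simp add: PAut_def positions_eq_Plus)
  then obtain \<alpha> \<beta> where \<alpha>\<beta>: "bij_betw \<alpha> (vecs s) (vecs s)" "bij_betw \<beta> (vecs s) (vecs s)"
    and \<sigma>_eq: "\<And>p. p \<in> vecs s <+> vecs s \<Longrightarrow> \<sigma> p = cross_map \<alpha> \<beta> p"
    by (rule bij_betw_Plus_left_to_rightE[OF _ finite_vecs])
       (auto intro: PAut_SQS_blocks_moves_left_to_right[OF \<rho> nonadd \<sigma>])
  have "cross_map \<alpha> \<beta> \<in> PAut (positions s) (SQS_blocks s \<rho>)"
    using \<sigma>(1) SQS_blocks_subset_positions[OF \<rho>] \<sigma>_eq by (rule PAut_cong) (simp add: positions_eq_Plus)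
  then show ?thesis
    using swappable_if_cross_map_in_PAut[OF \<rho> \<alpha>\<beta>] by blast
qed

lemma point_transitive_SQS_blocks_if_coord_transitive:
  assumes \<rho>: "perm_fix0 s \<rho>" and "coord_transitive (positions s) (sum_code s \<rho>)"
  shows "point_transitive (positions s) (SQS_blocks s \<rho>)"
  unfolding SQS_blocks_eq_weight4[OF \<rho>]
proof (rule point_transitive_weight_if_coord_transitive)
  show "\<forall>W\<in>sum_code s \<rho>. W \<subseteq> positions s"
    using sum_code_subset_positions by blast
qed fact

lemma point_transitive_SQS_blocks_iff_swappable:
  assumes \<rho>: "perm_fix0 s \<rho>"
  shows "point_transitive (positions s) (SQS_blocks s \<rho>) \<longleftrightarrow> swappable s \<rho>"
  using swappable_if_point_transitive[OF \<rho>] point_transitive_SQS_blocks_if_coord_transitive[OF \<rho>]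
    coord_transitive_sum_code_if_swappable[OF \<rho>]
  by blast

lemma coord_transitive_Scode_iff_swappable:
  assumes \<rho>: "perm_fix0 s \<rho>"
  shows "coord_transitive (positions s) (Scode s \<rho>) \<longleftrightarrow> swappable s \<rho>"
  unfolding Scode_eq_sum_code[OF \<rho>]
  using swappable_if_point_transitive[OF \<rho>] point_transitive_SQS_blocks_if_coord_transitive[OF \<rho>]
    coord_transitive_sum_code_if_swappable[OF \<rho>]
  by blast

section \<open>Concatenated permutations\<close>

lemma cat_perm_append [simp]: "length x = r \<Longrightarrow> cat_perm r f f' (x @ y) = f x @ f' y"
  by (simp add: cat_perm_def)

lemma length_append_sumE:
  assumes "length z = r + r'"
  obtains x y where "z = x @ y" "length x = r" "length y = r'"
proof
  show "z = take r z @ drop r z"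
    by simp
qed (use assms in simp_all)

lemma vadd_append: "length a = length c \<Longrightarrow> vadd (a @ b) (c @ d) = vadd a c @ vadd b d"
  by (simp add: vadd_def)

lemma zero_add: "zero (r + r') = zero r @ zero r'"
  by (simp add: zero_def replicate_add)

lemma bij_betw_cat_perm:
  assumes "bij_betw f (vecs r) (vecs r)" "bij_betw f' (vecs r') (vecs r')"
  shows "bij_betw (cat_perm r f f') (vecs (r + r')) (vecs (r + r'))"
proof -
  have split: "bij_betw (\<lambda>z. (take r z, drop r z)) (vecs (r + r')) (vecs r \<times> vecs r')"
    by (rule bij_betw_byWitness[where f' = "\<lambda>(x, y). x @ y"]) auto
  have join: "bij_betw (\<lambda>(x, y). x @ y) (vecs r \<times> vecs r') (vecs (r + r'))"
    by (rule bij_betw_byWitness[where f' = "\<lambda>z. (take r z, drop r z)"]) auto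
  have "bij_betw ((\<lambda>(x, y). x @ y) \<circ> map_prod f f' \<circ> (\<lambda>z. (take r z, drop r z))) (vecs (r + r')) (vecs (r + r'))"
    using split bij_betw_map_prod[OF assms] join by (blast intro: bij_betw_trans)
  moreover have "(\<lambda>(x, y). x @ y) \<circ> map_prod f f' \<circ> (\<lambda>z. (take r z, drop r z)) = cat_perm r f f'"
    by (simp add: fun_eq_iff cat_perm_def)
  ultimately show ?thesis
    by simp
qed

lemma perm_fix0_cat_perm:
  "perm_fix0 r \<tau> \<Longrightarrow> perm_fix0 r' \<tau>' \<Longrightarrow> perm_fix0 (r + r') (cat_perm r \<tau> \<tau>')"
  unfolding perm_fix0_def by (simp add: bij_betw_cat_perm zero_add)

lemma linear_perm_cat_perm:
  assumes M: "linear_perm r M" and M': "linear_perm r' M'"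
  shows "linear_perm (r + r') (cat_perm r M M')"
  unfolding linear_perm_def
proof (intro conjI ballI)
  show "bij_betw (cat_perm r M M') (vecs (r + r')) (vecs (r + r'))"
    using M M' by (simp add: linear_perm_def bij_betw_cat_perm)
  fix z w assume "z \<in> vecs (r + r')" "w \<in> vecs (r + r')"
  then obtain x y x' y' where "z = x @ y" "length x = r" "length y = r'"
    and "w = x' @ y'" "length x' = r" "length y' = r'"
    by (auto elim!: length_append_sumE)
  then show "cat_perm r M M' (vadd z w) = vadd (cat_perm r M M' z) (cat_perm r M M' w)"
    by (simp add: vadd_append linear_perm_length[OF M] linear_perm_add[OF M] linear_perm_add[OF M'])
qed

lemma affine_perm_cat_perm:
  assumes g: "affine_perm r g" and g': "affine_perm r' g'"
  shows "affine_perm (r + r') (cat_perm r g g')"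
  unfolding affine_perm_def
proof (intro conjI ballI)
  show "bij_betw (cat_perm r g g') (vecs (r + r')) (vecs (r + r'))"
    using g g' by (simp add: affine_perm_def bij_betw_cat_perm)
  fix u v w assume "u \<in> vecs (r + r')" "v \<in> vecs (r + r')" "w \<in> vecs (r + r')"
  then obtain x y x' y' x'' y'' where "u = x @ y" "length x = r" "length y = r'"
    and "v = x' @ y'" "length x' = r" "length y' = r'"
    and "w = x'' @ y''" "length x'' = r" "length y'' = r'"
    by (auto elim!: length_append_sumE)
  then show "cat_perm r g g' (vadd (vadd u v) w) =
      vadd (vadd (cat_perm r g g' u) (cat_perm r g g' v)) (cat_perm r g g' w)"
    by (simp add: vadd_append affine_perm_length[OF g] affine_perm_add3[OF g] affine_perm_add3[OF g'])
qed

lemma swappable_cat_perm: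
  assumes \<tau>: "perm_fix0 r \<tau>" and "swappable r \<tau>" and "swappable r' \<tau>'"
  shows "swappable (r + r') (cat_perm r \<tau> \<tau>')"
proof -
  obtain M N where M: "linear_perm r M" "linear_perm r N" "\<forall>x\<in>vecs r. \<tau> (M (\<tau> x)) = N x"
    using \<open>swappable r \<tau>\<close> by (auto simp: swappable_def)
  obtain M' N' where M': "linear_perm r' M'" "linear_perm r' N'" "\<forall>x\<in>vecs r'. \<tau>' (M' (\<tau>' x)) = N' x"
    using \<open>swappable r' \<tau>'\<close> by (auto simp: swappable_def)
  have "cat_perm r \<tau> \<tau>' (cat_perm r M M' (cat_perm r \<tau> \<tau>' z)) = cat_perm r N N' z"
    if z: "z \<in> vecs (r + r')" for z
  proof -
    obtain x y where "z = x @ y" "length x = r" "length y = r'"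
      by (rule length_append_sumE[of z r r']) (use z in simp)
    then show ?thesis
      using M(3) M'(3) by (simp add: perm_fix0_length[OF \<tau>] linear_perm_length[OF M(1)])
  qed
  then show ?thesis
    unfolding swappable_def using linear_perm_cat_perm M M' by blast
qed

section \<open>Transitivity of the automorphism group on the words of \<open>S\<^sub>\<rho>\<close>\<close>

definition affinely_transitive :: "nat \<Rightarrow> (bool list \<Rightarrow> bool list) \<Rightarrow> bool" where
  "affinely_transitive s \<rho> \<longleftrightarrow> (\<forall>a\<in>vecs s. \<forall>a'\<in>vecs s. \<exists>g h. affine_perm s g \<and> affine_perm s h \<and>
      g a = a' \<and> (\<forall>z\<in>vecs s. \<rho> (g z) = h (\<rho> z)))"

lemma affinely_transitive_cat_perm:
  assumes \<tau>: "perm_fix0 r \<tau>" and "affinely_transitive r \<tau>" "affinely_transitive r' \<tau>'"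
  shows "affinely_transitive (r + r') (cat_perm r \<tau> \<tau>')"
  unfolding affinely_transitive_def
proof (intro ballI)
  fix a a' assume "a \<in> vecs (r + r')" "a' \<in> vecs (r + r')"
  then obtain x y x' y' where a: "a = x @ y" "length x = r" "length y = r'"
    and a': "a' = x' @ y'" "length x' = r" "length y' = r'"
    by (auto elim!: length_append_sumE)
  obtain g h where g: "affine_perm r g" "affine_perm r h" "g x = x'" "\<forall>z\<in>vecs r. \<tau> (g z) = h (\<tau> z)"
    using \<open>affinely_transitive r \<tau>\<close>[unfolded affinely_transitive_def, rule_format, of x x'] a a' by auto
  obtain g' h' where g': "affine_perm r' g'" "affine_perm r' h'" "g' y = y'" "\<forall>z\<in>vecs r'. \<tau>' (g' z) = h' (\<tau>' z)"
    using \<open>affinely_transitive r' \<tau>'\<close>[unfolded affinely_transitive_def, rule_format, of y y'] a a' by auto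
  have "cat_perm r \<tau> \<tau>' (cat_perm r g g' z) = cat_perm r h h' (cat_perm r \<tau> \<tau>' z)"
    if z: "z \<in> vecs (r + r')" for z
  proof -
    obtain u v where "z = u @ v" "length u = r" "length v = r'"
      by (rule length_append_sumE[of z r r']) (use z in simp)
    then show ?thesis
      using g(4) g'(4) by (simp add: perm_fix0_length[OF \<tau>] affine_perm_length[OF g(1)])
  qed
  moreover have "cat_perm r g g' a = a'"
    using a a' g(3) g'(3) by simp
  ultimately show "\<exists>g h. affine_perm (r + r') g \<and> affine_perm (r + r') h \<and> g a = a' \<and>
      (\<forall>z\<in>vecs (r + r'). cat_perm r \<tau> \<tau>' (g z) = h (cat_perm r \<tau> \<tau>' z))"
    using affine_perm_cat_perm[OF g(1) g'(1)] affine_perm_cat_perm[OF g(2) g'(2)] by blast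
qed

lemma matvec_vadd:
  assumes "length x = s" "length y = s"
  shows "matvec s M (vadd x y) = vadd (matvec s M x) (matvec s M y)"
proof (rule nth_equalityI)
  fix i assume "i < length (matvec s M (vadd x y))"
  then have i: "i < s"
    by (simp add: matvec_def)
  have "{j. j < s \<and> M i j \<and> vadd x y ! j} = symd {j. j < s \<and> M i j \<and> x ! j} {j. j < s \<and> M i j \<and> y ! j}"
    using assms by (auto simp: symd_def)
  then show "matvec s M (vadd x y) ! i = vadd (matvec s M x) (matvec s M y) ! i"
    using i by (simp add: matvec_def even_card_symd_iff)
qed (simp add: matvec_def)

lemma affine_perm_cong:
  assumes f: "affine_perm s f" and eq: "\<And>x. length x = s \<Longrightarrow> g x = f x"
  shows "affine_perm s g"
proof -
  have "bij_betw g (vecs s) (vecs s) \<longleftrightarrow> bij_betw f (vecs s) (vecs s)"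
    by (rule bij_betw_cong) (simp add: eq)
  then show ?thesis
    using f eq affine_perm_length[OF f] unfolding affine_perm_def by simp
qed

lemma affine_perm_if_in_GA:
  assumes "g \<in> GA s"
  shows "affine_perm s g"
proof -
  obtain a M where g: "g = restrict (\<lambda>b. vadd a (matvec s M b)) (vecs s)" and a: "length a = s"
    and M: "bij_betw (matvec s M) (vecs s) (vecs s)"
    using assms unfolding GA_def by auto
  have "linear_perm s (matvec s M)"
    using M by (simp add: linear_perm_def matvec_vadd)
  then have "affine_perm s (\<lambda>b. vadd (matvec s M b) a)"
    using a by (rule affine_perm_linear_translate)
  moreover have "g b = vadd (matvec s M b) a" if "length b = s" for b
    using g that by (simp add: vadd_commute)
  ultimately show ?thesis
    by (rule affine_perm_cong)
qed

lemma g_elt: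
  assumes "regular_subgroup s G" "z \<in> vecs s"
  shows "g_elt s G z \<in> G" "g_elt s G z (zero s) = z"
proof -
  have "\<exists>!g. g \<in> G \<and> g (zero s) = z"
    using assms unfolding regular_subgroup_def by simp
  then have "g_elt s G z \<in> G \<and> g_elt s G z (zero s) = z"
    unfolding g_elt_def by (rule theI')
  then show "g_elt s G z \<in> G" "g_elt s G z (zero s) = z"
    by blast+
qed

lemma g_elt_eqI:
  assumes "regular_subgroup s G" "z \<in> vecs s" "g \<in> G" "g (zero s) = z"
  shows "g_elt s G z = g"
proof -
  have "\<exists>!g. g \<in> G \<and> g (zero s) = z"
    using assms unfolding regular_subgroup_def by simp
  then show ?thesis
    unfolding g_elt_def by (rule the1_equality) (simp add: assms(3,4))
qed

text \<open>For \<open>g \<in> G\<close> the element of \<open>G\<close> moving \<open>0\<close> to \<open>g z\<close> is \<open>g \<circ> g\<^sub>z\<close>; applying \<open>T\<close> and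
  evaluating at \<open>0\<close> gives \<open>\<rho> (g z) = T g (\<rho> z)\<close>.\<close>

lemma affinely_transitive_if_induced_by_reg_aut:
  assumes \<rho>: "perm_fix0 s \<rho>" and "induced_by_reg_aut s \<rho>"
  shows "affinely_transitive s \<rho>"
proof -
  obtain G T where reg: "regular_subgroup s G"
    and T: "T \<in> iso (GAgrp s\<lparr>carrier := G\<rparr>) (GAgrp s\<lparr>carrier := G\<rparr>)"
    and Tg: "\<forall>a\<in>vecs s. T (g_elt s G a) = g_elt s G (\<rho> a)"
    using \<open>induced_by_reg_aut s \<rho>\<close> unfolding induced_by_reg_aut_def by blast
  have sub: "subgroup G (GAgrp s)"
    using reg unfolding regular_subgroup_def by blast
  have GA: "G \<subseteq> GA s"
    using subgroup.subset[OF sub] by (simp add: GAgrp_def)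
  have closed: "compose (vecs s) g g' \<in> G" if "g \<in> G" "g' \<in> G" for g g'
    using subgroup.m_closed[OF sub that] by (simp add: GAgrp_def)
  have TG: "T g \<in> G" and T_mult: "T (compose (vecs s) g g') = compose (vecs s) (T g) (T g')"
    if "g \<in> G" "g' \<in> G" for g g'
    using T that unfolding iso_def hom_def by (auto simp: GAgrp_def)
  show ?thesis
    unfolding affinely_transitive_def
  proof (intro ballI)
    fix a a' assume "a \<in> vecs s" "a' \<in> vecs s"
    then obtain g where g: "g \<in> G" "g a = a'"
      using reg unfolding regular_subgroup_def by blast
    have "\<rho> (g z) = T g (\<rho> z)" if z: "z \<in> vecs s" for z
    proof -
      have gz: "g z \<in> vecs s" "\<rho> z \<in> vecs s" "\<rho> (g z) \<in> vecs s"
        using z affine_perm_length[OF affine_perm_if_in_GA] g(1) GA perm_fix0_length[OF \<rho>] by auto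
      have "g_elt s G (\<rho> (g z)) = T (g_elt s G (g z))"
        using Tg gz(1) by simp
      also have "g_elt s G (g z) = compose (vecs s) g (g_elt s G z)"
        using g_elt[OF reg z] g(1) gz(1) by (intro g_elt_eqI[OF reg] closed) (simp_all add: compose_eq)
      also have "T \<dots> = compose (vecs s) (T g) (g_elt s G (\<rho> z))"
        using T_mult[OF g(1) g_elt(1)[OF reg z]] Tg z by simp
      finally show ?thesis
        using g_elt(2)[OF reg gz(3)] g_elt(2)[OF reg gz(2)] by (simp add: compose_eq)
    qed
    then show "\<exists>g h. affine_perm s g \<and> affine_perm s h \<and> g a = a' \<and> (\<forall>z\<in>vecs s. \<rho> (g z) = h (\<rho> z))"
      using g GA TG[OF g(1) g(1)] affine_perm_if_in_GA by blast
  qed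
qed

lemma vsum_symd_image_affine_perm:
  assumes g: "affine_perm s g" and X: "X \<subseteq> vecs s" "even (card X)" and X': "X' \<subseteq> vecs s"
    and gX: "g (vsum s X) = vsum s X'"
  shows "vsum s (symd X' (g ` X)) = g (zero s)"
proof -
  have "vsum s (symd X' (g ` X)) = vadd (g (vsum s X)) (linear_part s g (vsum s X))"
    using X X' gX finite_subset_vecs by (simp add: vsum_symd vsum_image_affine_perm_even[OF g])
  then show ?thesis
    using affine_perm_eq_linear_part[OF g, of "vsum s X"] affine_perm_length[OF g, of "zero s"]
      linear_part_length[OF g]
    by (simp add: vadd_assoc)
qed

lemma is_aut_map_sum_sum_code:
  assumes \<rho>: "perm_fix0 s \<rho>" and g: "affine_perm s g" and h: "affine_perm s h"
    and gh: "\<forall>z\<in>vecs s. \<rho> (g z) = h (\<rho> z)"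
    and x: "X0 <+> Y0 \<in> sum_code s \<rho>" and X0: "vsum s X0 = g (zero s)" and Y0: "vsum s Y0 = h (zero s)"
  shows "is_aut (positions s) (sum_code s \<rho>) (X0 <+> Y0) (map_sum g h)"
proof -
  have "\<rho> (vadd (vsum s X0) (linear_part s g b)) = vadd (vsum s Y0) (linear_part s h (\<rho> b))"
    if "length b = s" for b
    using that gh affine_perm_eq_linear_part[OF g that, symmetric]
      affine_perm_eq_linear_part[OF h perm_fix0_length[OF \<rho> that], symmetric]
    by (simp add: X0 Y0)
  then have "(\<lambda>W. symd (X0 <+> Y0) (map_sum g h ` W)) ` sum_code s \<rho> = sum_code s \<rho>"
    by (rule map_sum_translate_sum_code[OF g h x])
  then show ?thesis
    unfolding is_aut_def using sum_code_subset_positions[OF x] bij_betw_positions_map_sum[OF g h] by simp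
qed

lemma sum_code_transitive_if_affinely_transitive:
  assumes \<rho>: "perm_fix0 s \<rho>" and R: "affinely_transitive s \<rho>"
    and c: "c \<in> sum_code s \<rho>" and c': "c' \<in> sum_code s \<rho>"
  shows "\<exists>x \<pi>. is_aut (positions s) (sum_code s \<rho>) x \<pi> \<and> symd x (\<pi> ` c) = c'"
proof -
  obtain X Y where c_eq: "c = X <+> Y" and XY: "X \<subseteq> vecs s" "Y \<subseteq> vecs s" "even (card X)" "even (card Y)"
    "vsum s Y = \<rho> (vsum s X)"
    using c by (rule sum_codeE)
  obtain X' Y' where c'_eq: "c' = X' <+> Y'" and XY': "X' \<subseteq> vecs s" "Y' \<subseteq> vecs s" "even (card X')"
    "even (card Y')" "vsum s Y' = \<rho> (vsum s X')"
    using c' by (rule sum_codeE)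
  obtain g h where g: "affine_perm s g" and h: "affine_perm s h" and ga: "g (vsum s X) = vsum s X'"
    and gh: "\<forall>z\<in>vecs s. \<rho> (g z) = h (\<rho> z)"
    using R[unfolded affinely_transitive_def, rule_format, of "vsum s X" "vsum s X'"] by auto
  let ?X0 = "symd X' (g ` X)" and ?Y0 = "symd Y' (h ` Y)"
  have X0: "vsum s ?X0 = g (zero s)"
    using vsum_symd_image_affine_perm[OF g XY(1,3) XY'(1) ga] .
  have "h (vsum s Y) = vsum s Y'"
    using gh ga XY(5) XY'(5) by (metis in_vecs_iff length_vsum)
  then have Y0: "vsum s ?Y0 = h (zero s)"
    using vsum_symd_image_affine_perm[OF h XY(2,4) XY'(2)] by simp
  have "\<rho> (g (zero s)) = h (zero s)"
    using gh perm_fix0_zero[OF \<rho>] by (metis in_vecs_iff length_zero)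
  then have "?X0 <+> ?Y0 \<in> sum_code s \<rho>"
    using X0 Y0 XY XY' finite_subset_vecs image_affine_perm_subset[OF g XY(1)] image_affine_perm_subset[OF h XY(2)]
    by (simp add: symd_subset even_card_symd_iff card_image_affine_perm[OF g] card_image_affine_perm[OF h])
  then have "is_aut (positions s) (sum_code s \<rho>) (?X0 <+> ?Y0) (map_sum g h)"
    by (rule is_aut_map_sum_sum_code[OF \<rho> g h gh _ X0 Y0])
  moreover have "symd (?X0 <+> ?Y0) (map_sum g h ` c) = c'"
    using c_eq c'_eq by (simp add: symd_Plus)
  ultimately show ?thesis
    by blast
qed

section \<open>Neighbor transitivity\<close>

lemma is_aut_empty_iff: "is_aut N C {} \<pi> \<longleftrightarrow> \<pi> \<in> PAut N C"
  by (simp add: is_aut_def PAut_def)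

lemma symd_image_comp:
  assumes "inj_on p2 N" "x1 \<subseteq> N" "p1 ` w \<subseteq> N"
  shows "symd (symd x2 (p2 ` x1)) ((p2 \<circ> p1) ` w) = symd x2 (p2 ` symd x1 (p1 ` w))"
  using image_symd[OF assms] by (simp add: symd_assoc image_comp)

lemma is_aut_image_subset: "is_aut N C x \<pi> \<Longrightarrow> W \<subseteq> N \<Longrightarrow> \<pi> ` W \<subseteq> N"
  unfolding is_aut_def bij_betw_def by blast

lemma is_aut_comp_apply:
  assumes "is_aut N C x1 p1" "is_aut N C x2 p2" "w \<subseteq> N"
  shows "symd (symd x2 (p2 ` x1)) ((p2 \<circ> p1) ` w) = symd x2 (p2 ` symd x1 (p1 ` w))"
  using assms is_aut_image_subset[OF assms(1,3)] by (intro symd_image_comp) (auto simp: is_aut_def bij_betw_def)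

lemma is_aut_apply_symd_singleton:
  assumes "is_aut N C x \<pi>" "c \<subseteq> N" "p \<in> N"
  shows "symd x (\<pi> ` symd c {p}) = symd (symd x (\<pi> ` c)) {\<pi> p}"
  using image_symd[of \<pi> N c "{p}"] assms by (simp add: is_aut_def bij_betw_def symd_assoc)

lemma is_aut_comp:
  assumes a1: "is_aut N C x1 p1" and a2: "is_aut N C x2 p2" and C: "\<forall>W\<in>C. W \<subseteq> N"
  shows "is_aut N C (symd x2 (p2 ` x1)) (p2 \<circ> p1)"
proof -
  have "(\<lambda>y. symd (symd x2 (p2 ` x1)) ((p2 \<circ> p1) ` y)) ` C
      = (\<lambda>y. symd x2 (p2 ` y)) ` (\<lambda>y. symd x1 (p1 ` y)) ` C"
    unfolding image_image using C by (intro image_cong refl is_aut_comp_apply[OF a1 a2]) blast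
  also have "\<dots> = C"
    using a1 a2 by (simp add: is_aut_def)
  finally have "(\<lambda>y. symd (symd x2 (p2 ` x1)) ((p2 \<circ> p1) ` y)) ` C = C" .
  moreover have "x1 \<subseteq> N" "x2 \<subseteq> N" "bij_betw (p2 \<circ> p1) N N"
    using a1 a2 bij_betw_trans[of p1 N N p2 N] by (simp_all add: is_aut_def)
  ultimately show ?thesis
    using symd_subset[of x2 N "p2 ` x1"] is_aut_image_subset[OF a2, of x1] unfolding is_aut_def by simp
qed

lemma neighborsE:
  assumes "y \<in> neighbors N C" "\<forall>W\<in>C. W \<subseteq> N"
  obtains c p where "c \<in> C" "p \<in> N" "y = symd c {p}"
proof -
  obtain c p where c: "y \<subseteq> N" "c \<in> C" "symd y c = {p}"
    using assms(1) by (auto simp: neighbors_def card_1_singleton_iff)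
  moreover have "p \<in> N"
    using c assms(2) unfolding symd_def by blast
  moreover have "y = symd c {p}"
    using c(3) by (metis symd_cancel_right symd_commute)
  ultimately show thesis
    using that by blast
qed

text \<open>A neighbor \<open>c + e\<^sub>p\<close> is moved to the weight-one word \<open>e\<^sub>q\<close> by an automorphism sending \<open>c\<close> to \<open>0\<close>;
  coordinate permutations act transitively on these, and an automorphism sending \<open>0\<close> to \<open>c'\<close> finishes.\<close>

lemma neighbor_transitiveI:
  assumes C: "\<forall>W\<in>C. W \<subseteq> N" and empty: "{} \<in> C"
    and trans: "\<And>c c'. c \<in> C \<Longrightarrow> c' \<in> C \<Longrightarrow> \<exists>x \<pi>. is_aut N C x \<pi> \<and> symd x (\<pi> ` c) = c'"
    and ct: "coord_transitive N C"
  shows "neighbor_transitive N C"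
  unfolding neighbor_transitive_def
proof (intro conjI ballI)
  fix c c' assume "c \<in> C" "c' \<in> C"
  then show "\<exists>x \<pi>. is_aut N C x \<pi> \<and> symd x (\<pi> ` c) = c'"
    by (rule trans)
next
  fix y y' assume "y \<in> neighbors N C" "y' \<in> neighbors N C"
  then obtain c p c' p' where c: "c \<in> C" "p \<in> N" "y = symd c {p}" and c': "c' \<in> C" "p' \<in> N" "y' = symd c' {p'}"
    using neighborsE[OF _ C] by metis
  have y: "y \<subseteq> N"
    using c C by (simp add: symd_subset)
  obtain x1 p1 where a1: "is_aut N C x1 p1" "symd x1 (p1 ` c) = {}"
    using trans[OF c(1) empty] by blast
  obtain x3 p3 where a3: "is_aut N C x3 p3" "symd x3 (p3 ` {}) = c'"
    using trans[OF empty c'(1)] by blast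
  have "p' \<in> p3 ` N"
    using a3(1) c'(2) by (simp add: is_aut_def bij_betw_def)
  then obtain q where q: "q \<in> N" "p3 q = p'"
    by (metis imageE)
  have "p1 p \<in> N"
    using is_aut_image_subset[OF a1(1), of "{p}"] c(2) by simp
  then obtain \<sigma> where \<sigma>: "\<sigma> \<in> PAut N C" "\<sigma> (p1 p) = q"
    using ct q(1) unfolding coord_transitive_iff by blast
  then have a2: "is_aut N C {} \<sigma>"
    by (simp add: is_aut_empty_iff)
  have "symd x1 (p1 ` y) = {p1 p}"
    using is_aut_apply_symd_singleton[OF a1(1)] c C a1(2) by simp
  then have "symd (symd {} (\<sigma> ` x1)) ((\<sigma> \<circ> p1) ` y) = {q}"
    using is_aut_comp_apply[OF a1(1) a2 y] \<sigma>(2) by simp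
  then have "symd (symd x3 (p3 ` symd {} (\<sigma> ` x1))) ((p3 \<circ> (\<sigma> \<circ> p1)) ` y) = y'"
    using is_aut_comp_apply[OF is_aut_comp[OF a1(1) a2 C] a3(1) y] is_aut_apply_symd_singleton[OF a3(1), of "{}" q]
      a3(2) q c'(3)
    by simp
  then show "\<exists>x \<pi>. is_aut N C x \<pi> \<and> symd x (\<pi> ` y) = y'"
    using is_aut_comp[OF is_aut_comp[OF a1(1) a2 C] a3(1) C] by blast
qed

lemma neighbor_transitive_Scode:
  assumes \<rho>: "perm_fix0 s \<rho>" and "affinely_transitive s \<rho>" and "coord_transitive (positions s) (Scode s \<rho>)"
  shows "neighbor_transitive (positions s) (Scode s \<rho>)"
  using assms(3) unfolding Scode_eq_sum_code[OF \<rho>]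
  by (intro neighbor_transitiveI ballI sum_code_subset_positions empty_in_sum_code[OF \<rho>]
      sum_code_transitive_if_affinely_transitive[OF \<rho> assms(2)])

theorem theorem6:
  fixes \<tau> \<tau>' :: "bool list \<Rightarrow> bool list" and r r' :: nat
  assumes "r \<ge> 1" and "r' \<ge> 1"
    and "perm_fix0 r \<tau>" and "perm_fix0 r' \<tau>'"
  shows "(point_transitive (positions r) (SQS_blocks r \<tau>) \<and>
          point_transitive (positions r') (SQS_blocks r' \<tau>') \<longrightarrow>
          point_transitive (positions (r + r')) (SQS_blocks (r + r') (cat_perm r \<tau> \<tau>')))
       \<and> (coord_transitive (positions r) (Scode r \<tau>) \<and>
          coord_transitive (positions r') (Scode r' \<tau>') \<longrightarrow>
          coord_transitive (positions (r + r')) (Scode (r + r') (cat_perm r \<tau> \<tau>')))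
       \<and> (induced_by_reg_aut r \<tau> \<and> induced_by_reg_aut r' \<tau>' \<and>
          coord_transitive (positions r) (Scode r \<tau>) \<and>
          coord_transitive (positions r') (Scode r' \<tau>') \<longrightarrow>
          neighbor_transitive (positions (r + r')) (Scode (r + r') (cat_perm r \<tau> \<tau>')))"
proof -
  note \<tau> = \<open>perm_fix0 r \<tau>\<close> and \<tau>' = \<open>perm_fix0 r' \<tau>'\<close>
  have cat: "perm_fix0 (r + r') (cat_perm r \<tau> \<tau>')"
    using \<tau> \<tau>' by (rule perm_fix0_cat_perm)
  have point: "point_transitive (positions (r + r')) (SQS_blocks (r + r') (cat_perm r \<tau> \<tau>'))"
    if "point_transitive (positions r) (SQS_blocks r \<tau>)" "point_transitive (positions r') (SQS_blocks r' \<tau>')"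
    using that swappable_cat_perm[OF \<tau>] by (simp add: point_transitive_SQS_blocks_iff_swappable \<tau> \<tau>' cat)
  have coord: "coord_transitive (positions (r + r')) (Scode (r + r') (cat_perm r \<tau> \<tau>'))"
    if "coord_transitive (positions r) (Scode r \<tau>)" "coord_transitive (positions r') (Scode r' \<tau>')"
    using that swappable_cat_perm[OF \<tau>] by (simp add: coord_transitive_Scode_iff_swappable \<tau> \<tau>' cat)
  have affine: "affinely_transitive (r + r') (cat_perm r \<tau> \<tau>')"
    if "induced_by_reg_aut r \<tau>" "induced_by_reg_aut r' \<tau>'"
    using that by (intro affinely_transitive_cat_perm[OF \<tau>] affinely_transitive_if_induced_by_reg_aut \<tau> \<tau>')
  show ?thesis
    using point coord affine neighbor_transitive_Scode[OF cat] by blast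
qed

end
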